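(* Let $(M,g)$ be a Riemannian manifold of dimension $n\ge 3$ with constant scalar curvature, and let $\xi$ be a vector field of constant length such that its dual $1$-form $\xi^\flat$ is a solution of the Schrödinger–Ricci equation $(\Delta+\mathrm{Ric}_\sharp)(\xi^\flat)+d(\mathrm{div}\,\xi)=0$. If $(g,\xi,\gamma,\delta)$ defines a $\xi^\flat$-Ricci soliton on $M$, i.e. $\gamma,\delta$ are real constants with $\frac12\mathcal{L}_\xi g+\mathrm{Ric}=\gamma g+\delta\,\xi^\flat\otimes\xi^\flat$, then either $\delta=0$ (the soliton is a Ricci soliton) or $\mathrm{div}\,\xi=0$.
   Context: $\xi^\flat=g(\xi,\cdot)$, $\mathrm{Ric}_\sharp(\theta)(X)=\mathrm{Ric}(\theta^\sharp,X)$. $\Delta$ is the operator on $1$-forms which the paper calls the Laplace–Hodge operator, with convention fixed by the identity $\mathrm{div}(\mathcal{L}_Xg)=(\Delta+\mathrm{Ric}_\sharp)(X^\flat)+d(\mathrm{div}X)$ for every vector field $X$ (with $(\mathrm{div}T)(X)=\sum_i(\nabla_{E_i}T)(E_i,X)$ for a symmetric $(0,2)$-tensor $T$). *)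

theory Defs
  imports "HOL-Analysis.Analysis"
begin

text \<open>Local coordinate rendering of Riemannian geometry on an open set U of R^n
  (index type 'n, n = CARD('n)).\<close>

type_synonym 'n field = "real^'n \<Rightarrow> real"

definition pd :: "'n::finite \<Rightarrow> (real^'n \<Rightarrow> real) \<Rightarrow> real^'n \<Rightarrow> real" where
  "pd i f x = frechet_derivative f (at x) (axis i 1)"

fun Ck :: "nat \<Rightarrow> (real^'n::finite) set \<Rightarrow> (real^'n \<Rightarrow> real) \<Rightarrow> bool" where
  "Ck 0 U f = continuous_on U f"
| "Ck (Suc k) U f = ((\<forall>x\<in>U. f differentiable (at x)) \<and> (\<forall>i. Ck k U (pd i f)))"

definition smooth_on :: "(real^'n::finite) set \<Rightarrow> (real^'n \<Rightarrow> real) \<Rightarrow> bool" where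
  "smooth_on U f = (\<forall>k. Ck k U f)"

definition riemannian_metric :: "(real^'n::finite) set \<Rightarrow> (real^'n \<Rightarrow> real^'n^'n) \<Rightarrow> bool" where
  "riemannian_metric U g =
     ((\<forall>i j. smooth_on U (\<lambda>x. g x $ i $ j)) \<and>
      (\<forall>x\<in>U. \<forall>i j. g x $ i $ j = g x $ j $ i) \<and>
      (\<forall>x\<in>U. \<forall>v. v \<noteq> 0 \<longrightarrow> (\<Sum>i\<in>UNIV. \<Sum>j\<in>UNIV. v $ i * g x $ i $ j * v $ j) > 0))"

definition ginv :: "(real^'n::finite \<Rightarrow> real^'n^'n) \<Rightarrow> real^'n \<Rightarrow> real^'n^'n" where
  "ginv g x = matrix_inv (g x)"

definition christoffel :: "(real^'n::finite \<Rightarrow> real^'n^'n) \<Rightarrow> 'n \<Rightarrow> 'n \<Rightarrow> 'n \<Rightarrow> real^'n \<Rightarrow> real" where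
  "christoffel g k i j x = (1/2) * (\<Sum>l\<in>UNIV. ginv g x $ k $ l *
      (pd i (\<lambda>y. g y $ j $ l) x + pd j (\<lambda>y. g y $ i $ l) x - pd l (\<lambda>y. g y $ i $ j) x))"

definition ricci :: "(real^'n::finite \<Rightarrow> real^'n^'n) \<Rightarrow> 'n \<Rightarrow> 'n \<Rightarrow> real^'n \<Rightarrow> real" where
  "ricci g i j x =
     (\<Sum>k\<in>UNIV. pd k (christoffel g k i j) x)
   - (\<Sum>k\<in>UNIV. pd j (christoffel g k i k) x)
   + (\<Sum>k\<in>UNIV. \<Sum>l\<in>UNIV. christoffel g k k l x * christoffel g l i j x)
   - (\<Sum>k\<in>UNIV. \<Sum>l\<in>UNIV. christoffel g k j l x * christoffel g l i k x)"

definition scalar_curv :: "(real^'n::finite \<Rightarrow> real^'n^'n) \<Rightarrow> real^'n \<Rightarrow> real" where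
  "scalar_curv g x = (\<Sum>i\<in>UNIV. \<Sum>j\<in>UNIV. ginv g x $ i $ j * ricci g i j x)"

definition flat :: "(real^'n::finite \<Rightarrow> real^'n^'n) \<Rightarrow> (real^'n \<Rightarrow> real^'n) \<Rightarrow> 'n \<Rightarrow> real^'n \<Rightarrow> real" where
  "flat g \<xi> i x = (\<Sum>j\<in>UNIV. g x $ i $ j * \<xi> x $ j)"

definition sq_length :: "(real^'n::finite \<Rightarrow> real^'n^'n) \<Rightarrow> (real^'n \<Rightarrow> real^'n) \<Rightarrow> real^'n \<Rightarrow> real" where
  "sq_length g \<xi> x = (\<Sum>i\<in>UNIV. \<Sum>j\<in>UNIV. g x $ i $ j * \<xi> x $ i * \<xi> x $ j)"

definition divergence :: "(real^'n::finite \<Rightarrow> real^'n^'n) \<Rightarrow> (real^'n \<Rightarrow> real^'n) \<Rightarrow> real^'n \<Rightarrow> real" where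
  "divergence g \<xi> x = (\<Sum>i\<in>UNIV. pd i (\<lambda>y. \<xi> y $ i) x)
     + (\<Sum>i\<in>UNIV. \<Sum>k\<in>UNIV. christoffel g i i k x * \<xi> x $ k)"

definition lie_metric :: "(real^'n::finite \<Rightarrow> real^'n^'n) \<Rightarrow> (real^'n \<Rightarrow> real^'n) \<Rightarrow> 'n \<Rightarrow> 'n \<Rightarrow> real^'n \<Rightarrow> real" where
  "lie_metric g \<xi> i j x =
     (\<Sum>k\<in>UNIV. \<xi> x $ k * pd k (\<lambda>y. g y $ i $ j) x)
   + (\<Sum>k\<in>UNIV. g x $ k $ j * pd i (\<lambda>y. \<xi> y $ k) x)
   + (\<Sum>k\<in>UNIV. g x $ i $ k * pd j (\<lambda>y. \<xi> y $ k) x)"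

definition cov1 :: "(real^'n::finite \<Rightarrow> real^'n^'n) \<Rightarrow> ('n \<Rightarrow> real^'n \<Rightarrow> real) \<Rightarrow> 'n \<Rightarrow> 'n \<Rightarrow> real^'n \<Rightarrow> real" where
  "cov1 g \<theta> k j x = pd k (\<theta> j) x - (\<Sum>l\<in>UNIV. christoffel g l k j x * \<theta> l x)"

definition cov2 :: "(real^'n::finite \<Rightarrow> real^'n^'n) \<Rightarrow> ('n \<Rightarrow> real^'n \<Rightarrow> real) \<Rightarrow> 'n \<Rightarrow> 'n \<Rightarrow> 'n \<Rightarrow> real^'n \<Rightarrow> real" where
  "cov2 g \<theta> i k j x = pd i (cov1 g \<theta> k j) x
     - (\<Sum>l\<in>UNIV. christoffel g l i k x * cov1 g \<theta> l j x)
     - (\<Sum>l\<in>UNIV. christoffel g l i j x * cov1 g \<theta> k l x)"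

text \<open>The Laplace operator on 1-forms in the paper's convention
  div(L_X g) = (Delta + Ric_sharp)(X^flat) + d(div X): Delta = trace of nabla^2.\<close>
definition laplace1 :: "(real^'n::finite \<Rightarrow> real^'n^'n) \<Rightarrow> ('n \<Rightarrow> real^'n \<Rightarrow> real) \<Rightarrow> 'n \<Rightarrow> real^'n \<Rightarrow> real" where
  "laplace1 g \<theta> j x = (\<Sum>i\<in>UNIV. \<Sum>k\<in>UNIV. ginv g x $ i $ k * cov2 g \<theta> i k j x)"

definition ric_sharp :: "(real^'n::finite \<Rightarrow> real^'n^'n) \<Rightarrow> ('n \<Rightarrow> real^'n \<Rightarrow> real) \<Rightarrow> 'n \<Rightarrow> real^'n \<Rightarrow> real" where
  "ric_sharp g \<theta> j x = (\<Sum>a\<in>UNIV. \<Sum>b\<in>UNIV. ginv g x $ a $ b * \<theta> b x * ricci g a j x)"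

end

theory Submission
  imports Defs
begin

text \<open>Take the divergence of the soliton equation. With the paper's convention for the
  Laplacian, div(L_\<xi> g) = (\<Delta> + Ric_\<sharp>)(\<xi>\<flat>) + d(div \<xi>), which vanishes by the
  Schroedinger--Ricci equation; by the contracted second Bianchi identity
  div Ric = d(scal)/2 = 0. What remains is \<delta> div(\<xi>\<flat> \<otimes> \<xi>\<flat>) = \<delta> ((div \<xi>) \<xi>\<flat> + \<nabla>_\<xi> \<xi>\<flat>) = 0.
  Evaluating on \<xi> and using that constant length means g(\<nabla>_X \<xi>, \<xi>) = 0 gives
  \<delta> (div \<xi>) |\<xi>|^2 = 0, and if |\<xi>| = 0 then \<xi> = 0 and div \<xi> = 0.\<close>

lemma sum_kronecker_mult [simp]:
  "(\<Sum>p\<in>UNIV. (if (m::'n::finite) = p then 1 else 0) * (E p :: 'a::semiring_1)) = E m"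
  by (subst sum.cong[OF refl, of _ _ "\<lambda>p. if m = p then E p else 0"]) auto

lemma sum_reverse3:
  "(\<Sum>k\<in>A. \<Sum>a\<in>B. \<Sum>m\<in>C. F k a m) = (\<Sum>m\<in>C. \<Sum>a\<in>B. \<Sum>k\<in>A. (F k a m :: 'b::comm_monoid_add))"
proof -
  have "(\<Sum>k\<in>A. \<Sum>a\<in>B. \<Sum>m\<in>C. F k a m) = (\<Sum>k\<in>A. \<Sum>m\<in>C. \<Sum>a\<in>B. F k a m)"
    by (rule sum.cong[OF refl]) (rule sum.swap)
  also have "\<dots> = (\<Sum>m\<in>C. \<Sum>k\<in>A. \<Sum>a\<in>B. F k a m)" by (rule sum.swap)
  also have "\<dots> = (\<Sum>m\<in>C. \<Sum>a\<in>B. \<Sum>k\<in>A. F k a m)"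
    by (rule sum.cong[OF refl]) (rule sum.swap)
  finally show ?thesis .
qed

lemma sum_rotate3:
  "(\<Sum>k\<in>A. \<Sum>a\<in>B. \<Sum>m\<in>C. F k a m) = (\<Sum>m\<in>C. \<Sum>k\<in>A. \<Sum>a\<in>B. (F k a m :: 'b::comm_monoid_add))"
proof -
  have "(\<Sum>k\<in>A. \<Sum>a\<in>B. \<Sum>m\<in>C. F k a m) = (\<Sum>k\<in>A. \<Sum>m\<in>C. \<Sum>a\<in>B. F k a m)"
    by (rule sum.cong[OF refl]) (rule sum.swap)
  also have "\<dots> = (\<Sum>m\<in>C. \<Sum>k\<in>A. \<Sum>a\<in>B. F k a m)" by (rule sum.swap)
  finally show ?thesis .
qed

lemma matrix_add_rdistrib: "(A + B) ** C = A ** C + B ** (C :: 'a::semiring_1^'p^'n)"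
  by (vector matrix_matrix_mult_def sum.distrib[symmetric] distrib_right)

lemma matrix_diff_rdistrib: "(A - B) ** C = A ** C - B ** (C :: 'a::ring_1^'p^'n)"
  by (vector matrix_matrix_mult_def sum_subtractf[symmetric] left_diff_distrib)

lemma matrix_diff_ldistrib: "C ** (A - B) = C ** A - C ** (B :: 'a::ring_1^'p^'n)"
  by (vector matrix_matrix_mult_def sum_subtractf[symmetric] right_diff_distrib)

lemma matrix_minus_mult: "(- A) ** C = - (A ** (C :: 'a::ring_1^'p^'n))"
  by (vector matrix_matrix_mult_def sum_negf[symmetric])

lemma matrix_mult_minus: "C ** (- A) = - (C ** (A :: 'a::ring_1^'p^'n))"
  by (vector matrix_matrix_mult_def sum_negf[symmetric])

lemmas matrix_ring_simps = matrix_add_ldistrib matrix_add_rdistrib matrix_diff_ldistrib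
  matrix_diff_rdistrib matrix_minus_mult matrix_mult_minus matrix_mul_assoc

lemma transpose_add: "transpose (A + B) = transpose A + transpose (B :: 'a::ab_group_add^'n^'m)"
  by (simp add: vec_eq_iff transpose_def)

lemma transpose_diff: "transpose (A - B) = transpose A - transpose (B :: 'a::ab_group_add^'n^'m)"
  by (simp add: vec_eq_iff transpose_def)

lemma transpose_uminus: "transpose (- A) = - transpose (A :: 'a::ab_group_add^'n^'m)"
  by (simp add: vec_eq_iff transpose_def)

lemma pd_eq_of_has_derivative: "(f has_derivative f') (at x) \<Longrightarrow> pd i f x = f' (axis i 1)"
  by (simp add: pd_def frechet_derivative_at[symmetric])

lemma pd_cong:
  assumes "open U" "x \<in> U" "\<And>y. y \<in> U \<Longrightarrow> f y = h y"
  shows "pd i f x = pd i h x"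
proof -
  have "(\<lambda>f'. (f has_derivative f') (at x)) = (\<lambda>f'. (h has_derivative f') (at x))"
    using has_derivative_transform_within_open[OF _ assms(1,2), of f _ UNIV h]
      has_derivative_transform_within_open[OF _ assms(1,2), of h _ UNIV f] assms(3)
    by (intro ext iffI) auto
  then show ?thesis unfolding pd_def frechet_derivative_def by simp
qed

lemma pd_const [simp]: "pd i (\<lambda>y. c) = (\<lambda>y. 0)"
  by (rule ext, rule pd_eq_of_has_derivative[where f'="\<lambda>_. 0", simplified]) (rule has_derivative_const)

lemma pd_add: "f differentiable (at x) \<Longrightarrow> h differentiable (at x) \<Longrightarrow>
    pd i (\<lambda>y. f y + h y) x = pd i f x + pd i h x"
  unfolding pd_def by (metis frechet_derivative_at frechet_derivative_works has_derivative_add)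

lemma pd_diff: "f differentiable (at x) \<Longrightarrow> h differentiable (at x) \<Longrightarrow>
    pd i (\<lambda>y. f y - h y) x = pd i f x - pd i h x"
  unfolding pd_def by (metis frechet_derivative_at frechet_derivative_works has_derivative_diff)

lemma pd_mult:
  assumes "f differentiable (at x)" "h differentiable (at x)"
  shows "pd i (\<lambda>y. f y * h y) x = pd i f x * h x + f x * pd i h x"
proof -
  have "((\<lambda>y. f y * h y) has_derivative
      (\<lambda>v. f x * frechet_derivative h (at x) v + frechet_derivative f (at x) v * h x)) (at x)"
    using has_derivative_mult assms unfolding frechet_derivative_works by blast
  from pd_eq_of_has_derivative[OF this] show ?thesis by (simp add: pd_def algebra_simps)
qed

lemma pd_sum:
  assumes "finite A" "\<And>a. a \<in> A \<Longrightarrow> F a differentiable (at x)"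
  shows "pd i (\<lambda>y. \<Sum>a\<in>A. F a y) x = (\<Sum>a\<in>A. pd i (F a) x)"
proof -
  have "((\<lambda>y. \<Sum>a\<in>A. F a y) has_derivative (\<lambda>v. \<Sum>a\<in>A. frechet_derivative (F a) (at x) v)) (at x)"
    using assms by (intro has_derivative_sum) (simp add: frechet_derivative_works)
  from pd_eq_of_has_derivative[OF this] show ?thesis by (simp add: pd_def)
qed

lemma pd_inverse:
  assumes "f differentiable (at x)" "f x \<noteq> 0"
  shows "pd i (\<lambda>y. inverse (f y)) x = - (inverse (f x) * pd i f x * inverse (f x))"
  using pd_eq_of_has_derivative[OF Deriv.has_derivative_inverse[OF assms(2)
      assms(1)[unfolded frechet_derivative_works]]]
  by (simp add: pd_def)

lemma Ck_cong:
  assumes "open U"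
  shows "Ck k U f \<Longrightarrow> (\<And>y. y \<in> U \<Longrightarrow> f y = h y) \<Longrightarrow> Ck k U h"
proof (induction k arbitrary: f h)
  case 0
  then show ?case using continuous_on_cong by (metis Ck.simps(1))
next
  case (Suc k)
  have "h differentiable (at x)" if "x \<in> U" for x
  proof -
    have "f differentiable (at x)" using Suc.prems(1) that by simp
    then obtain D where "(f has_derivative D) (at x)" unfolding differentiable_def by blast
    then show ?thesis
      using has_derivative_transform_within_open[OF _ assms that, of f D UNIV h] Suc.prems(2)
      unfolding differentiable_def by auto
  qed
  moreover have "Ck k U (pd i h)" for i
    using Suc.prems Suc.IH[of "pd i f" "pd i h"] pd_cong[OF assms _ Suc.prems(2)] by simp
  ultimately show ?case by simp
qed

lemma Ck_SucD: "Ck (Suc k) U f \<Longrightarrow> Ck k U f"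
proof (induction k arbitrary: f)
  case 0
  then show ?case
    by (auto intro!: continuous_at_imp_continuous_on differentiable_imp_continuous_within)
next
  case (Suc k)
  then show ?case by simp
qed

lemma Ck_const: "Ck k U (\<lambda>y. c)"
  by (induction k arbitrary: c) auto

lemma Ck_add: "open U \<Longrightarrow> Ck k U f \<Longrightarrow> Ck k U h \<Longrightarrow> Ck k U (\<lambda>y. f y + h y)"
proof (induction k arbitrary: f h)
  case 0
  then show ?case by (auto intro: continuous_on_add)
next
  case (Suc k)
  have "Ck k U (pd i (\<lambda>y. f y + h y))" for i
  proof (rule Ck_cong[OF \<open>open U\<close>])
    show "Ck k U (\<lambda>y. pd i f y + pd i h y)" using Suc by simp
    show "pd i f y + pd i h y = pd i (\<lambda>y. f y + h y) y" if "y \<in> U" for y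
      using Suc.prems that by (simp add: pd_add)
  qed
  then show ?case using Suc.prems by simp
qed

lemma Ck_mult: "open U \<Longrightarrow> Ck k U f \<Longrightarrow> Ck k U h \<Longrightarrow> Ck k U (\<lambda>y. f y * h y)"
proof (induction k arbitrary: f h)
  case 0
  then show ?case by (auto intro: continuous_on_mult)
next
  case (Suc k)
  have f: "Ck k U f" and h: "Ck k U h" using Suc.prems Ck_SucD by blast+
  have "Ck k U (pd i (\<lambda>y. f y * h y))" for i
  proof (rule Ck_cong[OF \<open>open U\<close>])
    show "Ck k U (\<lambda>y. pd i f y * h y + f y * pd i h y)"
      using Suc f h by (intro Ck_add) simp_all
    show "pd i f y * h y + f y * pd i h y = pd i (\<lambda>y. f y * h y) y" if "y \<in> U" for y
      using Suc.prems that by (simp add: pd_mult)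
  qed
  then show ?case using Suc.prems by simp
qed

lemma Ck_sum:
  assumes "open U" "finite A" "\<And>a. a \<in> A \<Longrightarrow> Ck k U (F a)"
  shows "Ck k U (\<lambda>y. \<Sum>a\<in>A. F a y)"
  using assms(2,3) by (induction A rule: finite_induct) (simp_all add: Ck_const Ck_add[OF assms(1)])

lemma Ck_prod:
  assumes "open U" "finite A" "\<And>a. a \<in> A \<Longrightarrow> Ck k U (F a)"
  shows "Ck k U (\<lambda>y. \<Prod>a\<in>A. F a y)"
  using assms(2,3) by (induction A rule: finite_induct) (simp_all add: Ck_const Ck_mult[OF assms(1)])

lemma Ck_inverse:
  "open U \<Longrightarrow> smooth_on U f \<Longrightarrow> (\<And>y. y \<in> U \<Longrightarrow> f y \<noteq> 0) \<Longrightarrow> Ck k U (\<lambda>y. inverse (f y))"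
proof (induction k)
  case 0
  then have "continuous_on U f" unfolding smooth_on_def by (metis Ck.simps(1))
  then show ?case using 0 by (simp add: continuous_on_inverse)
next
  case (Suc k)
  have d: "\<forall>y\<in>U. f differentiable (at y)" and p: "Ck k U (pd i f)" for i
    using Suc.prems unfolding smooth_on_def by (metis Ck.simps(2))+
  have "Ck k U (pd i (\<lambda>y. inverse (f y)))" for i
  proof (rule Ck_cong[OF \<open>open U\<close>])
    show "Ck k U (\<lambda>y. - 1 * ((inverse (f y) * pd i f y) * inverse (f y)))"
      using Suc p by (intro Ck_mult Ck_const) simp_all
    show "- 1 * ((inverse (f y) * pd i f y) * inverse (f y)) = pd i (\<lambda>y. inverse (f y)) y"
      if "y \<in> U" for y
      using d that Suc.prems by (simp add: pd_inverse)
  qed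
  then show ?case using d Suc.prems by simp
qed

lemma smooth_on_imp_differentiable: "smooth_on U f \<Longrightarrow> x \<in> U \<Longrightarrow> f differentiable (at x)"
  unfolding smooth_on_def by (metis Ck.simps(2))

lemma smooth_on_pd: "smooth_on U f \<Longrightarrow> smooth_on U (pd i f)"
  unfolding smooth_on_def by (metis Ck.simps(2))

lemma smooth_on_imp_continuous_on: "smooth_on U f \<Longrightarrow> continuous_on U f"
  unfolding smooth_on_def by (metis Ck.simps(1))

lemma smooth_on_const [simp]: "smooth_on U (\<lambda>y. c)"
  unfolding smooth_on_def by (simp add: Ck_const)

lemma smooth_on_det:
  "open U \<Longrightarrow> (\<And>r c. smooth_on U (\<lambda>y. M y $ r $ c)) \<Longrightarrow> smooth_on U (\<lambda>y. det (M y :: real^'n::finite^'n))"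
  unfolding det_def smooth_on_def
  by (intro allI Ck_sum Ck_mult Ck_prod Ck_const finite_permutations) auto

definition pd_mat :: "'n::finite \<Rightarrow> (real^'n \<Rightarrow> real^'n^'n) \<Rightarrow> real^'n \<Rightarrow> real^'n^'n" where
  "pd_mat i M x = (\<chi> r c. pd i (\<lambda>y. M y $ r $ c) x)"

section \<open>Symmetry of second partial derivatives\<close>

lemma has_derivative_along_line:
  fixes f :: "real^'n::finite \<Rightarrow> real"
  assumes "f differentiable (at (p + s *\<^sub>R v))"
  shows "((\<lambda>t. f (p + t *\<^sub>R v)) has_derivative
      (\<lambda>h. h * frechet_derivative f (at (p + s *\<^sub>R v)) v)) (at s within S)"
proof -
  have line: "((\<lambda>t. p + t *\<^sub>R v) has_derivative (\<lambda>h. h *\<^sub>R v)) (at s within S)"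
    by (auto intro!: derivative_eq_intros)
  have f: "(f has_derivative frechet_derivative f (at (p + s *\<^sub>R v))) (at (p + s *\<^sub>R v))"
    using assms frechet_derivative_works by blast
  from has_derivative_compose[OF line f] show ?thesis
    using linear_scale[OF has_derivative_linear[OF f]] by simp
qed

lemma second_difference_mean_value:
  fixes f :: "real^'n::finite \<Rightarrow> real"
  assumes sm: "smooth_on U f" and h: "h > 0"
    and sub: "\<And>s t. s \<in> {0..h} \<Longrightarrow> t \<in> {0..h} \<Longrightarrow> x + s *\<^sub>R axis i 1 + t *\<^sub>R axis j 1 \<in> U"
  obtains s t where "s \<in> {0..h}" "t \<in> {0..h}"
    "f (x + h *\<^sub>R axis i 1 + h *\<^sub>R axis j 1) - f (x + h *\<^sub>R axis i 1) - f (x + h *\<^sub>R axis j 1) + f x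
       = h * h * pd j (pd i f) (x + s *\<^sub>R axis i 1 + t *\<^sub>R axis j 1)"
proof -
  define e :: "real^'n" where "e = axis i 1"
  define d :: "real^'n" where "d = axis j 1"
  define \<phi> where "\<phi> s = f ((x + h *\<^sub>R d) + s *\<^sub>R e) - f (x + s *\<^sub>R e)" for s
  have "(\<phi> has_derivative (\<lambda>u. u * (pd i f ((x + h *\<^sub>R d) + s *\<^sub>R e) - pd i f (x + s *\<^sub>R e))))
      (at s within {0..h})" if "0 \<le> s" "s \<le> h" for s
  proof -
    have "(x + h *\<^sub>R d) + s *\<^sub>R e \<in> U" "x + s *\<^sub>R e \<in> U"
      using sub[of s h] sub[of s 0] that h by (simp_all add: e_def d_def algebra_simps)
    then have "(\<phi> has_derivative (\<lambda>u. u * frechet_derivative f (at ((x + h *\<^sub>R d) + s *\<^sub>R e)) e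
        - u * frechet_derivative f (at (x + s *\<^sub>R e)) e)) (at s within {0..h})"
      unfolding \<phi>_def
      by (intro has_derivative_diff has_derivative_along_line smooth_on_imp_differentiable[OF sm])
    then show ?thesis by (simp add: pd_def e_def algebra_simps)
  qed
  from mvt_simple[OF h this]
  obtain s where s: "s \<in> {0<..<h}"
    and es: "\<phi> h - \<phi> 0 = h * (pd i f ((x + h *\<^sub>R d) + s *\<^sub>R e) - pd i f (x + s *\<^sub>R e))"
    by auto
  define \<psi> where "\<psi> t = pd i f ((x + s *\<^sub>R e) + t *\<^sub>R d)" for t
  have "(\<psi> has_derivative (\<lambda>u. u * pd j (pd i f) ((x + s *\<^sub>R e) + t *\<^sub>R d))) (at t within {0..h})"
    if "0 \<le> t" "t \<le> h" for t
  proof -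
    have "(x + s *\<^sub>R e) + t *\<^sub>R d \<in> U" using sub[of s t] that s by (simp add: e_def d_def)
    then show ?thesis
      unfolding \<psi>_def pd_def[of j] d_def
      by (intro has_derivative_along_line smooth_on_imp_differentiable[OF smooth_on_pd[OF sm]])
        (simp add: d_def)
  qed
  from mvt_simple[OF h this]
  obtain t where t: "t \<in> {0<..<h}" and et: "\<psi> h - \<psi> 0 = h * pd j (pd i f) ((x + s *\<^sub>R e) + t *\<^sub>R d)"
    by auto
  have "f (x + h *\<^sub>R e + h *\<^sub>R d) - f (x + h *\<^sub>R e) - f (x + h *\<^sub>R d) + f x = \<phi> h - \<phi> 0"
    by (simp add: \<phi>_def algebra_simps)
  also have "\<dots> = h * (\<psi> h - \<psi> 0)" using es by (simp add: \<psi>_def algebra_simps)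
  also have "\<dots> = h * h * pd j (pd i f) (x + s *\<^sub>R e + t *\<^sub>R d)" using et by simp
  finally have eq: "f (x + h *\<^sub>R e + h *\<^sub>R d) - f (x + h *\<^sub>R e) - f (x + h *\<^sub>R d) + f x
      = h * h * pd j (pd i f) (x + s *\<^sub>R e + t *\<^sub>R d)" .
  show ?thesis by (rule that[OF _ _ eq[unfolded e_def d_def]]) (use s t in auto)
qed

lemma dist_add_axes_le:
  assumes "s \<ge> 0" "t \<ge> 0"
  shows "dist (x + s *\<^sub>R axis a 1 + t *\<^sub>R axis b 1) (x :: real^'n::finite) \<le> s + t"
proof -
  have "dist (x + s *\<^sub>R axis a 1 + t *\<^sub>R axis b 1) x = norm (s *\<^sub>R axis a 1 + t *\<^sub>R (axis b 1 :: real^'n))"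
    by (simp add: dist_norm)
  also have "\<dots> \<le> norm (s *\<^sub>R axis a 1 :: real^'n) + norm (t *\<^sub>R (axis b 1 :: real^'n))"
    by (rule norm_triangle_ineq)
  finally show ?thesis using assms by simp
qed

lemma mixed_pd_agree_nearby:
  fixes f :: "real^'n::finite \<Rightarrow> real"
  assumes sm: "smooth_on U f" and r: "r > 0" "ball x r \<subseteq> U"
  obtains y z where "dist y x < r" "dist z x < r" "pd j (pd i f) y = pd i (pd j f) z"
proof -
  define h where "h = r / 3"
  have h: "h > 0" using r by (simp add: h_def)
  have close: "dist (x + s *\<^sub>R axis a 1 + t *\<^sub>R axis b 1) x < r"
    if "s \<in> {0..h}" "t \<in> {0..h}" for s t a b
    using dist_add_axes_le[of s t x a b] that r(1) by (auto simp: h_def)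
  then have inU: "x + s *\<^sub>R axis a 1 + t *\<^sub>R axis b 1 \<in> U"
    if "s \<in> {0..h}" "t \<in> {0..h}" for s t a b
    using that r(2) by (auto simp: dist_commute)
  obtain s1 t1 where st1: "s1 \<in> {0..h}" "t1 \<in> {0..h}"
    "f (x + h *\<^sub>R axis i 1 + h *\<^sub>R axis j 1) - f (x + h *\<^sub>R axis i 1) - f (x + h *\<^sub>R axis j 1) + f x
       = h * h * pd j (pd i f) (x + s1 *\<^sub>R axis i 1 + t1 *\<^sub>R axis j 1)"
    using second_difference_mean_value[OF sm h inU] by blast
  obtain s2 t2 where st2: "s2 \<in> {0..h}" "t2 \<in> {0..h}"
    "f (x + h *\<^sub>R axis j 1 + h *\<^sub>R axis i 1) - f (x + h *\<^sub>R axis j 1) - f (x + h *\<^sub>R axis i 1) + f x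
       = h * h * pd i (pd j f) (x + s2 *\<^sub>R axis j 1 + t2 *\<^sub>R axis i 1)"
    using second_difference_mean_value[OF sm h inU] by blast
  have swap: "x + h *\<^sub>R axis j 1 + h *\<^sub>R axis i 1 = x + h *\<^sub>R axis i 1 + h *\<^sub>R (axis j 1 :: real^'n)"
    by (simp add: algebra_simps)
  have "h * h * pd j (pd i f) (x + s1 *\<^sub>R axis i 1 + t1 *\<^sub>R axis j 1)
      = h * h * pd i (pd j f) (x + s2 *\<^sub>R axis j 1 + t2 *\<^sub>R axis i 1)"
    using st1(3) st2(3)[unfolded swap] by linarith
  then show ?thesis
    using h close st1(1,2) st2(1,2) by (intro that) auto
qed

text \<open>Both mixed partials are limits of the same second difference quotient.\<close>

lemma pd_pd_commute:
  fixes f :: "real^'n::finite \<Rightarrow> real"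
  assumes U: "open U" and sm: "smooth_on U f" and x: "x \<in> U"
  shows "pd i (pd j f) x = pd j (pd i f) x"
proof (rule ccontr)
  define A where "A = pd j (pd i f) x"
  define B where "B = pd i (pd j f) x"
  define \<epsilon> where "\<epsilon> = \<bar>A - B\<bar> / 2"
  assume "pd i (pd j f) x \<noteq> pd j (pd i f) x"
  then have "\<epsilon> > 0" by (simp add: \<epsilon>_def A_def B_def)
  have "continuous (at x) (pd a (pd b f))" for a b
    using smooth_on_imp_continuous_on[OF smooth_on_pd[OF smooth_on_pd[OF sm]]] U x
      continuous_on_eq_continuous_at by blast
  then obtain dA dB where "dA > 0" "\<And>y. dist y x < dA \<Longrightarrow> dist (pd j (pd i f) y) A < \<epsilon>"
    and "dB > 0" "\<And>y. dist y x < dB \<Longrightarrow> dist (pd i (pd j f) y) B < \<epsilon>"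
    using \<open>\<epsilon> > 0\<close> unfolding continuous_at_eps_delta A_def B_def by meson
  moreover obtain r0 where "r0 > 0" "ball x r0 \<subseteq> U" using U x open_contains_ball by blast
  ultimately obtain r where r: "r > 0" "ball x r \<subseteq> U"
    and near: "\<And>y. dist y x < r \<Longrightarrow> dist (pd j (pd i f) y) A < \<epsilon> \<and> dist (pd i (pd j f) y) B < \<epsilon>"
    by (intro that[of "min r0 (min dA dB)"]) auto
  obtain y z where "dist y x < r" "dist z x < r" "pd j (pd i f) y = pd i (pd j f) z"
    using mixed_pd_agree_nearby[OF sm r] .
  then have "\<bar>A - B\<bar> < 2 * \<epsilon>" using near[of y] near[of z] by (simp add: dist_real_def abs_less_iff)
  then show False by (simp add: \<epsilon>_def)
qed

section \<open>The metric and its Christoffel symbols\<close>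

locale riemannian_chart =
  fixes U :: "(real^'n::finite) set" and g :: "real^'n \<Rightarrow> real^'n^'n"
  assumes open_U: "open U" and metric: "riemannian_metric U g"
begin

abbreviation smooth :: "(real^'n \<Rightarrow> real) \<Rightarrow> bool" where
  "smooth f \<equiv> smooth_on U f"

lemma smooth_cong: "smooth f \<Longrightarrow> (\<And>y. y \<in> U \<Longrightarrow> f y = h y) \<Longrightarrow> smooth h"
  unfolding smooth_on_def using Ck_cong[OF open_U] by blast

lemma smooth_add [simp]: "smooth f \<Longrightarrow> smooth h \<Longrightarrow> smooth (\<lambda>y. f y + h y)"
  unfolding smooth_on_def using Ck_add[OF open_U] by blast

lemma smooth_mult [simp]: "smooth f \<Longrightarrow> smooth h \<Longrightarrow> smooth (\<lambda>y. f y * h y)"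
  unfolding smooth_on_def using Ck_mult[OF open_U] by blast

lemma smooth_minus [simp]: "smooth f \<Longrightarrow> smooth (\<lambda>y. - f y)"
proof -
  assume "smooth f"
  then have "smooth (\<lambda>y. (- 1) * f y)" by (rule smooth_mult[OF smooth_on_const])
  then show ?thesis by (rule smooth_cong) simp
qed

lemma smooth_diff [simp]: "smooth f \<Longrightarrow> smooth h \<Longrightarrow> smooth (\<lambda>y. f y - h y)"
proof -
  assume "smooth f" "smooth h"
  then have "smooth (\<lambda>y. f y + - h y)" by (intro smooth_add smooth_minus)
  then show ?thesis by (rule smooth_cong) simp
qed

lemma smooth_divide_const [simp]: "smooth f \<Longrightarrow> smooth (\<lambda>y. f y / c)"
proof -
  assume "smooth f"
  then have "smooth (\<lambda>y. f y * inverse c)" by (intro smooth_mult) simp_all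
  then show ?thesis by (rule smooth_cong) (simp add: divide_inverse)
qed

lemma smooth_sum [simp]: "finite A \<Longrightarrow> (\<And>a. smooth (F a)) \<Longrightarrow> smooth (\<lambda>y. \<Sum>a\<in>A. F a y)"
  unfolding smooth_on_def using Ck_sum[OF open_U] by blast

lemma smooth_pd [simp]: "smooth f \<Longrightarrow> smooth (pd i f)"
  by (rule smooth_on_pd)

lemma smooth_inverse: "smooth f \<Longrightarrow> (\<And>y. y \<in> U \<Longrightarrow> f y \<noteq> 0) \<Longrightarrow> smooth (\<lambda>y. inverse (f y))"
  unfolding smooth_on_def using Ck_inverse[OF open_U] smooth_on_def by blast

lemma pd_cong_on: "x \<in> U \<Longrightarrow> (\<And>y. y \<in> U \<Longrightarrow> f y = h y) \<Longrightarrow> pd i f x = pd i h x"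
  using pd_cong[OF open_U] by blast

lemma pd_eq_zero_if_const: "x \<in> U \<Longrightarrow> (\<And>y. y \<in> U \<Longrightarrow> f y = c) \<Longrightarrow> pd i f x = 0"
  using pd_cong_on[of x f "\<lambda>y. c" i] by simp

lemma pd_add_smooth [simp]:
  "smooth f \<Longrightarrow> smooth h \<Longrightarrow> x \<in> U \<Longrightarrow> pd i (\<lambda>y. f y + h y) x = pd i f x + pd i h x"
  by (simp add: pd_add smooth_on_imp_differentiable)

lemma pd_diff_smooth [simp]:
  "smooth f \<Longrightarrow> smooth h \<Longrightarrow> x \<in> U \<Longrightarrow> pd i (\<lambda>y. f y - h y) x = pd i f x - pd i h x"
  by (simp add: pd_diff smooth_on_imp_differentiable)

lemma pd_mult_smooth [simp]:
  "smooth f \<Longrightarrow> smooth h \<Longrightarrow> x \<in> U \<Longrightarrow> pd i (\<lambda>y. f y * h y) x = pd i f x * h x + f x * pd i h x"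
  by (simp add: pd_mult smooth_on_imp_differentiable)

lemma pd_sum_smooth [simp]: "finite A \<Longrightarrow> (\<And>a. smooth (F a)) \<Longrightarrow> x \<in> U \<Longrightarrow>
    pd i (\<lambda>y. \<Sum>a\<in>A. F a y) x = (\<Sum>a\<in>A. pd i (F a) x)"
  by (rule pd_sum) (auto intro: smooth_on_imp_differentiable)

lemma pd_cmult [simp]: "smooth f \<Longrightarrow> x \<in> U \<Longrightarrow> pd i (\<lambda>y. c * f y) x = c * pd i f x"
  using pd_mult_smooth[where f="\<lambda>y. c" and h=f] by simp

lemma pd_minus [simp]: "smooth f \<Longrightarrow> x \<in> U \<Longrightarrow> pd i (\<lambda>y. - f y) x = - pd i f x"
  using pd_cmult[where c="- 1"] by simp

lemma pd_divide_const [simp]: "smooth f \<Longrightarrow> x \<in> U \<Longrightarrow> pd i (\<lambda>y. f y / c) x = pd i f x / c"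
  using pd_cmult[where c="inverse c"] by (simp add: divide_inverse mult.commute)

lemma pd_commute: "smooth f \<Longrightarrow> x \<in> U \<Longrightarrow> pd i (pd j f) x = pd j (pd i f) x"
  using pd_pd_commute[OF open_U] by blast

lemma metric_smooth [simp]: "smooth (\<lambda>y. g y $ i $ j)"
  using metric unfolding riemannian_metric_def by blast

lemma metric_sym: "x \<in> U \<Longrightarrow> g x $ i $ j = g x $ j $ i"
  using metric unfolding riemannian_metric_def by blast

lemma metric_pos: "x \<in> U \<Longrightarrow> v \<noteq> 0 \<Longrightarrow> (\<Sum>i\<in>UNIV. \<Sum>j\<in>UNIV. v $ i * g x $ i $ j * v $ j) > 0"
  using metric unfolding riemannian_metric_def by blast

lemma pd_metric_sym: "x \<in> U \<Longrightarrow> pd a (\<lambda>y. g y $ i $ j) x = pd a (\<lambda>y. g y $ j $ i) x"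
  by (rule pd_cong_on) (auto simp: metric_sym)

lemma transpose_metric: "x \<in> U \<Longrightarrow> transpose (g x) = g x"
  by (vector transpose_def metric_sym)

lemma det_metric_nonzero:
  assumes x: "x \<in> U"
  shows "det (g x) \<noteq> 0"
proof -
  have "v = 0" if "g x *v v = 0" for v
  proof (rule ccontr)
    assume "v \<noteq> 0"
    have "(\<Sum>i\<in>UNIV. \<Sum>j\<in>UNIV. v $ i * g x $ i $ j * v $ j) = (\<Sum>i\<in>UNIV. v $ i * (g x *v v) $ i)"
      by (simp add: matrix_vector_mult_def sum_distrib_left mult.assoc)
    also have "\<dots> = 0" using that by simp
    finally show False using metric_pos[OF x \<open>v \<noteq> 0\<close>] by simp
  qed
  then have "inj ((*v) (g x))"
    using linear_injective_0[OF matrix_vector_mul_linear] by blast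
  then show ?thesis using det_nz_iff_inj[OF matrix_vector_mul_linear, of "g x"]
    by (simp add: matrix_of_matrix_vector_mul)
qed

lemma metric_ginv:
  assumes "x \<in> U"
  shows metric_mult_ginv: "g x ** ginv g x = mat 1" and ginv_mult_metric: "ginv g x ** g x = mat 1"
proof -
  have "invertible (g x)" using det_metric_nonzero[OF assms] invertible_det_nz by blast
  then obtain B where "g x ** B = mat 1 \<and> B ** g x = mat 1" unfolding invertible_def by blast
  then have "g x ** ginv g x = mat 1 \<and> ginv g x ** g x = mat 1"
    unfolding ginv_def matrix_inv_def by (rule someI)
  then show "g x ** ginv g x = mat 1" "ginv g x ** g x = mat 1" by auto
qed

lemma sum_metric_ginv:
  "x \<in> U \<Longrightarrow> (\<Sum>l\<in>UNIV. g x $ i $ l * ginv g x $ l $ j) = (if i = j then 1 else 0)"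
  using metric_mult_ginv[of x] by (simp add: matrix_matrix_mult_def vec_eq_iff mat_def)

lemma sum_ginv_metric:
  "x \<in> U \<Longrightarrow> (\<Sum>l\<in>UNIV. ginv g x $ i $ l * g x $ l $ j) = (if i = j then 1 else 0)"
  using ginv_mult_metric[of x] by (simp add: matrix_matrix_mult_def vec_eq_iff mat_def)

lemma sum_ginv_metric_contract:
  assumes x: "x \<in> U"
  shows "(\<Sum>i\<in>UNIV. ginv g x $ a $ i * (\<Sum>k\<in>UNIV. g x $ i $ k * F k)) = F a"
proof -
  have "(\<Sum>i\<in>UNIV. ginv g x $ a $ i * (\<Sum>k\<in>UNIV. g x $ i $ k * F k))
      = (\<Sum>i\<in>UNIV. \<Sum>k\<in>UNIV. ginv g x $ a $ i * g x $ i $ k * F k)"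
    by (simp add: sum_distrib_left mult.assoc)
  also have "\<dots> = (\<Sum>k\<in>UNIV. (\<Sum>i\<in>UNIV. ginv g x $ a $ i * g x $ i $ k) * F k)"
    by (subst sum.swap) (simp add: sum_distrib_right)
  finally show ?thesis by (simp add: sum_ginv_metric[OF x])
qed

lemma transpose_ginv: assumes x: "x \<in> U" shows "transpose (ginv g x) = ginv g x"
proof -
  have "g x ** transpose (ginv g x) = mat 1"
    using arg_cong[OF ginv_mult_metric[OF x], of transpose]
    by (simp add: matrix_transpose_mul transpose_metric[OF x])
  then have "ginv g x ** (g x ** transpose (ginv g x)) = ginv g x" by simp
  then show ?thesis by (simp add: matrix_mul_assoc ginv_mult_metric[OF x])
qed

lemma ginv_sym: "x \<in> U \<Longrightarrow> ginv g x $ i $ j = ginv g x $ j $ i"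
  using arg_cong[OF transpose_ginv, of x "\<lambda>M. M $ j $ i"] by (simp add: transpose_def)

lemma ginv_cramer:
  assumes x: "x \<in> U"
  shows "ginv g x $ k $ j = det (\<chi> r c. if c = k then axis j 1 $ r else g x $ r $ c) / det (g x)"
proof -
  have "g x *v (ginv g x *v axis j 1) = axis j 1"
    by (simp add: matrix_vector_mul_assoc metric_mult_ginv[OF x])
  then have "(ginv g x *v axis j 1) $ k = det (\<chi> r c. if c = k then axis j 1 $ r else g x $ r $ c) / det (g x)"
    using cramer[OF det_metric_nonzero[OF x]] by auto
  moreover have "(ginv g x *v axis j 1) $ k = ginv g x $ k $ j"
    by (simp add: matrix_vector_mult_def axis_def if_distrib cong: if_cong)
  ultimately show ?thesis by simp
qed

lemma ginv_smooth [simp]: "smooth (\<lambda>y. ginv g y $ k $ j)"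
proof (rule smooth_cong)
  have "smooth (\<lambda>y. det (\<chi> r c. if c = k then axis j 1 $ r else g y $ r $ c))"
  proof (rule smooth_on_det[OF open_U])
    show "smooth (\<lambda>y. (\<chi> r c. if c = k then axis j 1 $ r else g y $ r $ c) $ r $ c)" for r c
      by (cases "c = k") simp_all
  qed
  moreover have "smooth (\<lambda>y. inverse (det (g y)))"
    by (rule smooth_inverse) (auto intro!: smooth_on_det open_U simp: det_metric_nonzero)
  ultimately show "smooth (\<lambda>y. det (\<chi> r c. if c = k then axis j 1 $ r else g y $ r $ c) * inverse (det (g y)))"
    by simp
  show "det (\<chi> r c. if c = k then axis j 1 $ r else g y $ r $ c) * inverse (det (g y)) = ginv g y $ k $ j"
    if "y \<in> U" for y
    using ginv_cramer[OF that] by (simp add: divide_inverse)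
qed

definition smooth_mat :: "(real^'n \<Rightarrow> real^'n^'n) \<Rightarrow> bool" where
  "smooth_mat M \<longleftrightarrow> (\<forall>r c. smooth (\<lambda>y. M y $ r $ c))"

lemma smooth_mat_entry [simp]: "smooth_mat M \<Longrightarrow> smooth (\<lambda>y. M y $ r $ c)"
  unfolding smooth_mat_def by simp

lemma smooth_mat_add [simp]: "smooth_mat M \<Longrightarrow> smooth_mat N \<Longrightarrow> smooth_mat (\<lambda>y. M y + N y)"
  unfolding smooth_mat_def by simp

lemma smooth_mat_diff [simp]: "smooth_mat M \<Longrightarrow> smooth_mat N \<Longrightarrow> smooth_mat (\<lambda>y. M y - N y)"
  unfolding smooth_mat_def by simp

lemma smooth_mat_uminus [simp]: "smooth_mat M \<Longrightarrow> smooth_mat (\<lambda>y. - M y)"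
  unfolding smooth_mat_def by simp

lemma smooth_mat_mult [simp]: "smooth_mat M \<Longrightarrow> smooth_mat N \<Longrightarrow> smooth_mat (\<lambda>y. M y ** N y)"
  unfolding smooth_mat_def matrix_matrix_mult_def by simp

lemma smooth_mat_pd_mat [simp]: "smooth_mat M \<Longrightarrow> smooth_mat (pd_mat i M)"
  unfolding smooth_mat_def pd_mat_def by simp

lemma metric_smooth_mat [simp]: "smooth_mat g"
  unfolding smooth_mat_def by simp

lemma ginv_smooth_mat [simp]: "smooth_mat (ginv g)"
  unfolding smooth_mat_def by simp

lemma pd_mat_add [simp]: "smooth_mat M \<Longrightarrow> smooth_mat N \<Longrightarrow> x \<in> U \<Longrightarrow>
    pd_mat i (\<lambda>y. M y + N y) x = pd_mat i M x + pd_mat i N x"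
  unfolding pd_mat_def by (simp add: vec_eq_iff)

lemma pd_mat_diff [simp]: "smooth_mat M \<Longrightarrow> smooth_mat N \<Longrightarrow> x \<in> U \<Longrightarrow>
    pd_mat i (\<lambda>y. M y - N y) x = pd_mat i M x - pd_mat i N x"
  unfolding pd_mat_def by (simp add: vec_eq_iff)

lemma pd_mat_uminus [simp]: "smooth_mat M \<Longrightarrow> x \<in> U \<Longrightarrow> pd_mat i (\<lambda>y. - M y) x = - pd_mat i M x"
  unfolding pd_mat_def by (simp add: vec_eq_iff)

lemma pd_mat_mult [simp]: "smooth_mat M \<Longrightarrow> smooth_mat N \<Longrightarrow> x \<in> U \<Longrightarrow>
    pd_mat i (\<lambda>y. M y ** N y) x = pd_mat i M x ** N x + M x ** pd_mat i N x"
  unfolding pd_mat_def matrix_matrix_mult_def by (simp add: vec_eq_iff sum.distrib)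

lemma pd_mat_const [simp]: "pd_mat i (\<lambda>y. C) x = 0"
  unfolding pd_mat_def by (simp add: vec_eq_iff)

lemma pd_mat_cong: "x \<in> U \<Longrightarrow> (\<And>y. y \<in> U \<Longrightarrow> M y = N y) \<Longrightarrow> pd_mat i M x = pd_mat i N x"
  unfolding pd_mat_def vec_eq_iff by (auto intro!: pd_cong_on)

lemma pd_mat_commute: "smooth_mat M \<Longrightarrow> x \<in> U \<Longrightarrow> pd_mat i (pd_mat j M) x = pd_mat j (pd_mat i M) x"
  unfolding pd_mat_def by (simp add: vec_eq_iff pd_commute)

lemma christoffel_smooth [simp]: "smooth (christoffel g k i j)"
  unfolding christoffel_def by simp

lemma christoffel_sym: "x \<in> U \<Longrightarrow> christoffel g k i j x = christoffel g k j i x"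
  unfolding christoffel_def using pd_metric_sym[of x _ i j] metric_sym[of x i j]
  by (simp add: algebra_simps)

lemma pd_christoffel_sym: "x \<in> U \<Longrightarrow> pd a (christoffel g l i j) x = pd a (christoffel g l j i) x"
  by (rule pd_cong_on) (auto simp: christoffel_sym)

lemma metric_christoffel:
  assumes x: "x \<in> U"
  shows "(\<Sum>l\<in>UNIV. g x $ m $ l * christoffel g l i j x) =
    (pd i (\<lambda>y. g y $ j $ m) x + pd j (\<lambda>y. g y $ i $ m) x - pd m (\<lambda>y. g y $ i $ j) x) / 2"
proof -
  define D where "D p = pd i (\<lambda>y. g y $ j $ p) x + pd j (\<lambda>y. g y $ i $ p) x - pd p (\<lambda>y. g y $ i $ j) x" for p
  have "(\<Sum>l\<in>UNIV. g x $ m $ l * christoffel g l i j x)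
      = (\<Sum>l\<in>UNIV. \<Sum>p\<in>UNIV. g x $ m $ l * ginv g x $ l $ p * D p) / 2"
    unfolding christoffel_def D_def by (simp add: sum_distrib_left sum_divide_distrib mult_ac)
  also have "\<dots> = (\<Sum>p\<in>UNIV. (\<Sum>l\<in>UNIV. g x $ m $ l * ginv g x $ l $ p) * D p) / 2"
    by (subst sum.swap) (simp add: sum_distrib_right)
  also have "\<dots> = D m / 2" by (simp add: sum_metric_ginv[OF x])
  finally show ?thesis by (simp add: D_def)
qed

lemma pd_metric:
  assumes x: "x \<in> U"
  shows "pd a (\<lambda>y. g y $ i $ j) x
    = (\<Sum>l\<in>UNIV. christoffel g l a i x * g x $ l $ j) + (\<Sum>l\<in>UNIV. christoffel g l a j x * g x $ i $ l)"
proof -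
  have "(\<Sum>l\<in>UNIV. christoffel g l a i x * g x $ l $ j) = (\<Sum>l\<in>UNIV. g x $ j $ l * christoffel g l a i x)"
    by (rule sum.cong) (auto simp: metric_sym[OF x, of _ j])
  also have "\<dots> = (pd a (\<lambda>y. g y $ i $ j) x + pd i (\<lambda>y. g y $ a $ j) x - pd j (\<lambda>y. g y $ a $ i) x) / 2"
    by (rule metric_christoffel[OF x])
  finally have 1: "(\<Sum>l\<in>UNIV. christoffel g l a i x * g x $ l $ j) = \<dots>" .
  have 2: "(\<Sum>l\<in>UNIV. christoffel g l a j x * g x $ i $ l)
      = (pd a (\<lambda>y. g y $ j $ i) x + pd j (\<lambda>y. g y $ a $ i) x - pd i (\<lambda>y. g y $ a $ j) x) / 2"
    using metric_christoffel[OF x, of i a j] by (simp add: mult.commute)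
  show ?thesis unfolding 1 2 using pd_metric_sym[OF x, of a i j] by (simp add: field_simps)
qed

text \<open>\<Gamma>_a is the matrix of \<nabla>_{\<partial>_a} acting on the coordinate fields.\<close>

definition christoffel_mat :: "'n \<Rightarrow> real^'n \<Rightarrow> real^'n^'n" where
  "christoffel_mat a x = (\<chi> l k. christoffel g l a k x)"

lemma christoffel_mat_smooth [simp]: "smooth_mat (christoffel_mat a)"
  unfolding smooth_mat_def christoffel_mat_def by simp

lemma christoffel_mat_entry [simp]: "christoffel_mat a x $ l $ k = christoffel g l a k x"
  by (simp add: christoffel_mat_def)

lemma pd_mat_metric:
  "x \<in> U \<Longrightarrow> pd_mat a g x = transpose (christoffel_mat a x) ** g x + g x ** christoffel_mat a x"
  by (simp add: vec_eq_iff pd_mat_def matrix_matrix_mult_def transpose_def pd_metric mult.commute)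

lemma pd_mat_ginv:
  assumes x: "x \<in> U"
  shows "pd_mat a (ginv g) x = - (ginv g x ** transpose (christoffel_mat a x)) - christoffel_mat a x ** ginv g x"
proof -
  have "pd_mat a (\<lambda>y. ginv g y ** g y) x = pd_mat a (\<lambda>y. mat 1) x"
    by (rule pd_mat_cong[OF x]) (simp add: metric_ginv)
  then have "(pd_mat a (ginv g) x ** g x + ginv g x ** pd_mat a g x) ** ginv g x = 0"
    using x by simp
  moreover have "pd_mat a (ginv g) x ** g x ** ginv g x = pd_mat a (ginv g) x"
    by (simp add: matrix_mul_assoc[symmetric] metric_ginv[OF x])
  ultimately have "pd_mat a (ginv g) x = - (ginv g x ** pd_mat a g x ** ginv g x)"
    by (simp add: matrix_ring_simps eq_neg_iff_add_eq_0)
  also have "ginv g x ** pd_mat a g x ** ginv g x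
      = ginv g x ** transpose (christoffel_mat a x) ** (g x ** ginv g x)
        + (ginv g x ** g x) ** christoffel_mat a x ** ginv g x"
    by (simp add: pd_mat_metric[OF x] matrix_ring_simps)
  finally show ?thesis by (simp add: metric_ginv[OF x])
qed

lemma pd_ginv:
  assumes x: "x \<in> U"
  shows "pd a (\<lambda>y. ginv g y $ i $ j) x
    = - (\<Sum>l\<in>UNIV. ginv g x $ i $ l * christoffel g j a l x) - (\<Sum>l\<in>UNIV. christoffel g i a l x * ginv g x $ l $ j)"
  using arg_cong[OF pd_mat_ginv[OF x, of a], of "\<lambda>M. M $ i $ j"]
  by (simp add: pd_mat_def matrix_matrix_mult_def transpose_def)

section \<open>Curvature and the second Bianchi identity\<close>

text \<open>Entry (m, k) of curv_mat i j x is the \<partial>_m-component of R(\<partial>_i, \<partial>_j) \<partial>_k.\<close>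

definition curv_mat :: "'n \<Rightarrow> 'n \<Rightarrow> real^'n \<Rightarrow> real^'n^'n" where
  "curv_mat i j x = pd_mat i (christoffel_mat j) x - pd_mat j (christoffel_mat i) x
     + christoffel_mat i x ** christoffel_mat j x - christoffel_mat j x ** christoffel_mat i x"

lemma curv_mat_smooth [simp]: "smooth_mat (curv_mat i j)"
  unfolding curv_mat_def[abs_def] by simp

lemma curv_mat_antisym: "curv_mat j i x = - curv_mat i j x"
  unfolding curv_mat_def by (simp add: algebra_simps)

lemma curv_mat_entry: "x \<in> U \<Longrightarrow> curv_mat a k x $ m $ j
    = pd a (christoffel g m k j) x - pd k (christoffel g m a j) x
      + (\<Sum>l\<in>UNIV. christoffel g m a l x * christoffel g l k j x)
      - (\<Sum>l\<in>UNIV. christoffel g m k l x * christoffel g l a j x)"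
  unfolding curv_mat_def by (simp add: pd_mat_def matrix_matrix_mult_def)

lemma ricci_smooth [simp]: "smooth (ricci g k j)"
  unfolding ricci_def by simp

lemma ricci_eq_trace_curv_mat: "x \<in> U \<Longrightarrow> ricci g k j x = (\<Sum>i\<in>UNIV. curv_mat i j x $ i $ k)"
  unfolding ricci_def curv_mat_def pd_mat_def matrix_matrix_mult_def
  by (simp add: sum.distrib sum_subtractf christoffel_sym pd_christoffel_sym)

definition christoffel_first :: "'n \<Rightarrow> real^'n \<Rightarrow> real^'n^'n" where
  "christoffel_first i y = g y ** christoffel_mat i y"

lemma christoffel_first_smooth [simp]: "smooth_mat (christoffel_first i)"
  unfolding christoffel_first_def[abs_def] by simp

lemma christoffel_first_entry: "y \<in> U \<Longrightarrow> christoffel_first j y $ m $ k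
    = (pd j (\<lambda>y. g y $ k $ m) y + pd k (\<lambda>y. g y $ j $ m) y - pd m (\<lambda>y. g y $ j $ k) y) / 2"
  unfolding christoffel_first_def using metric_christoffel[of y m j k]
  by (simp add: matrix_matrix_mult_def)

lemma pd_mat_christoffel_first_entry:
  assumes x: "x \<in> U"
  shows "pd_mat i (christoffel_first j) x $ m $ k
    = (pd i (pd j (\<lambda>y. g y $ k $ m)) x + pd i (pd k (\<lambda>y. g y $ j $ m)) x
        - pd i (pd m (\<lambda>y. g y $ j $ k)) x) / 2"
proof -
  have "pd_mat i (christoffel_first j) x $ m $ k
      = pd i (\<lambda>y. (pd j (\<lambda>y. g y $ k $ m) y + pd k (\<lambda>y. g y $ j $ m) y - pd m (\<lambda>y. g y $ j $ k) y) / 2) x"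
    unfolding pd_mat_def by simp (rule pd_cong_on[OF x], simp add: christoffel_first_entry)
  then show ?thesis using x by simp
qed

lemma metric_curv_mat:
  assumes x: "x \<in> U"
  shows "g x ** curv_mat i j x
    = pd_mat i (christoffel_first j) x - pd_mat j (christoffel_first i) x
      - transpose (christoffel_mat i x) ** g x ** christoffel_mat j x
      + transpose (christoffel_mat j x) ** g x ** christoffel_mat i x"
proof -
  have "pd_mat i (christoffel_first j) x
      = (transpose (christoffel_mat i x) ** g x + g x ** christoffel_mat i x) ** christoffel_mat j x
        + g x ** pd_mat i (christoffel_mat j) x"
    and "pd_mat j (christoffel_first i) x
      = (transpose (christoffel_mat j x) ** g x + g x ** christoffel_mat j x) ** christoffel_mat i x
        + g x ** pd_mat j (christoffel_mat i) x"
    unfolding christoffel_first_def[abs_def] using x by (simp_all add: pd_mat_metric)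
  then show ?thesis unfolding curv_mat_def by (simp add: matrix_ring_simps algebra_simps)
qed

lemma transpose_metric_curv_mat:
  assumes x: "x \<in> U"
  shows "transpose (g x ** curv_mat i j x) = - (g x ** curv_mat i j x)"
proof -
  have "transpose (pd_mat i (christoffel_first j) x - pd_mat j (christoffel_first i) x)
      = - (pd_mat i (christoffel_first j) x - pd_mat j (christoffel_first i) x)"
    unfolding vec_eq_iff transpose_def using x
    by (simp add: pd_mat_christoffel_first_entry pd_commute field_simps)
  moreover have "transpose (transpose (christoffel_mat i x) ** g x ** christoffel_mat j x)
      = transpose (christoffel_mat j x) ** g x ** christoffel_mat i x"
    by (simp add: matrix_transpose_mul transpose_metric[OF x] matrix_mul_assoc)
  ultimately show ?thesis unfolding metric_curv_mat[OF x]
    by (simp add: transpose_add transpose_diff transpose_uminus algebra_simps)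
      (simp add: matrix_transpose_mul transpose_metric[OF x] matrix_mul_assoc)
qed

lemma curv_mat_ginv_antisym:
  assumes x: "x \<in> U"
  shows "(curv_mat j a x ** ginv g x) $ l $ b = - (curv_mat j a x ** ginv g x) $ b $ l"
proof -
  define M where "M = g x ** curv_mat j a x"
  define N where "N = ginv g x ** M ** ginv g x"
  have "transpose M = - M" unfolding M_def by (rule transpose_metric_curv_mat[OF x])
  then have "transpose N = - N"
    unfolding N_def by (simp add: matrix_transpose_mul transpose_ginv[OF x] matrix_ring_simps)
  then have "transpose N $ b $ l = - N $ b $ l" by simp
  moreover have "curv_mat j a x ** ginv g x = N"
    unfolding N_def M_def by (simp add: matrix_mul_assoc ginv_mult_metric[OF x])
  ultimately show ?thesis by (simp add: transpose_def)
qed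

text \<open>\<partial>_a R_{ij} + [\<Gamma>_a, R_{ij}]: the covariant derivative of the endomorphism R(\<partial>_i, \<partial>_j) with
  the arguments \<partial>_i, \<partial>_j held fixed.\<close>

definition curv_mat_deriv :: "'n \<Rightarrow> 'n \<Rightarrow> 'n \<Rightarrow> real^'n \<Rightarrow> real^'n^'n" where
  "curv_mat_deriv a i j x
    = pd_mat a (curv_mat i j) x + christoffel_mat a x ** curv_mat i j x - curv_mat i j x ** christoffel_mat a x"

lemma curv_mat_deriv_entry: "x \<in> U \<Longrightarrow> curv_mat_deriv a i j x $ l $ k
    = pd a (\<lambda>y. curv_mat i j y $ l $ k) x
      + (\<Sum>m\<in>UNIV. christoffel g l a m x * curv_mat i j x $ m $ k)
      - (\<Sum>m\<in>UNIV. curv_mat i j x $ l $ m * christoffel g m a k x)"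
  unfolding curv_mat_deriv_def by (simp add: pd_mat_def matrix_matrix_mult_def)

text \<open>The cyclic sum cancels by the symmetry of second partial derivatives of the \<Gamma>'s and the
  Jacobi identity for the commutator.\<close>

lemma curv_mat_deriv_cyclic:
  assumes x: "x \<in> U"
  shows "curv_mat_deriv a i j x + curv_mat_deriv i j a x + curv_mat_deriv j a i x = 0"
proof -
  have "pd_mat a (pd_mat i (christoffel_mat j)) x = pd_mat i (pd_mat a (christoffel_mat j)) x"
    "pd_mat j (pd_mat a (christoffel_mat i)) x = pd_mat a (pd_mat j (christoffel_mat i)) x"
    "pd_mat i (pd_mat j (christoffel_mat a)) x = pd_mat j (pd_mat i (christoffel_mat a)) x"
    by (simp_all add: pd_mat_commute[OF _ x])
  then show ?thesis
    unfolding curv_mat_deriv_def curv_mat_def[abs_def] using x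
    by (simp add: matrix_ring_simps algebra_simps)
qed

text \<open>nabla_curv a i j l k x is the (l, k) entry of (\<nabla>_a R)(\<partial>_i, \<partial>_j).\<close>

definition nabla_curv :: "'n \<Rightarrow> 'n \<Rightarrow> 'n \<Rightarrow> 'n \<Rightarrow> 'n \<Rightarrow> real^'n \<Rightarrow> real" where
  "nabla_curv a i j l k x = curv_mat_deriv a i j x $ l $ k
     - (\<Sum>m\<in>UNIV. christoffel g m a i x * curv_mat m j x $ l $ k)
     - (\<Sum>m\<in>UNIV. christoffel g m a j x * curv_mat i m x $ l $ k)"

lemma second_bianchi:
  assumes x: "x \<in> U"
  shows "nabla_curv a i j l k x + nabla_curv i j a l k x + nabla_curv j a i l k x = 0"
proof -
  have "curv_mat_deriv a i j x $ l $ k + curv_mat_deriv i j a x $ l $ k + curv_mat_deriv j a i x $ l $ k = 0"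
    using arg_cong[OF curv_mat_deriv_cyclic[OF x, of a i j], of "\<lambda>M. M $ l $ k"] by simp
  then show ?thesis unfolding nabla_curv_def
    by (simp add: curv_mat_antisym[of j] curv_mat_antisym[of i] curv_mat_antisym[of a]
        christoffel_sym[OF x] sum_negf algebra_simps)
qed

lemma nabla_curv_antisym:
  assumes x: "x \<in> U"
  shows "nabla_curv a j i l k x = - nabla_curv a i j l k x"
proof -
  have "curv_mat j i = (\<lambda>y. - curv_mat i j y)" by (rule ext) (rule curv_mat_antisym)
  then have "curv_mat_deriv a j i x = - curv_mat_deriv a i j x"
    unfolding curv_mat_deriv_def using x by (simp add: matrix_ring_simps curv_mat_antisym[of j i])
  then show ?thesis unfolding nabla_curv_def
    by (simp add: curv_mat_antisym[of _ i] curv_mat_antisym[of _ j] sum_negf algebra_simps)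
qed

section \<open>Divergence of symmetric tensors and the contracted Bianchi identity\<close>

definition cov_tensor :: "('n \<Rightarrow> 'n \<Rightarrow> real^'n \<Rightarrow> real) \<Rightarrow> 'n \<Rightarrow> 'n \<Rightarrow> 'n \<Rightarrow> real^'n \<Rightarrow> real" where
  "cov_tensor T a i j x = pd a (T i j) x
     - (\<Sum>l\<in>UNIV. christoffel g l a i x * T l j x) - (\<Sum>l\<in>UNIV. christoffel g l a j x * T i l x)"

definition tensor_div :: "('n \<Rightarrow> 'n \<Rightarrow> real^'n \<Rightarrow> real) \<Rightarrow> 'n \<Rightarrow> real^'n \<Rightarrow> real" where
  "tensor_div T j x = (\<Sum>a\<in>UNIV. \<Sum>i\<in>UNIV. ginv g x $ a $ i * cov_tensor T a i j x)"

lemma cov_tensor_cong: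
  assumes x: "x \<in> U" and eq: "\<And>i j y. y \<in> U \<Longrightarrow> T i j y = S i j y"
  shows "cov_tensor T a i j x = cov_tensor S a i j x"
  unfolding cov_tensor_def using pd_cong_on[OF x eq] eq[OF x] by simp

lemma tensor_div_cong:
  assumes x: "x \<in> U" and eq: "\<And>i j y. y \<in> U \<Longrightarrow> T i j y = S i j y"
  shows "tensor_div T j x = tensor_div S j x"
  unfolding tensor_div_def using cov_tensor_cong[OF x eq] by simp

lemma cov_tensor_add:
  assumes "x \<in> U" "\<And>i j. smooth (T i j)" "\<And>i j. smooth (S i j)"
  shows "cov_tensor (\<lambda>i j y. T i j y + S i j y) a i j x = cov_tensor T a i j x + cov_tensor S a i j x"
  unfolding cov_tensor_def using assms by (simp add: sum.distrib distrib_left)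

lemma cov_tensor_cmult:
  assumes "x \<in> U" "\<And>i j. smooth (T i j)"
  shows "cov_tensor (\<lambda>i j y. c * T i j y) a i j x = c * cov_tensor T a i j x"
  unfolding cov_tensor_def using assms by (simp add: sum_distrib_left right_diff_distrib mult_ac)

lemma tensor_div_add:
  assumes "x \<in> U" "\<And>i j. smooth (T i j)" "\<And>i j. smooth (S i j)"
  shows "tensor_div (\<lambda>i j y. T i j y + S i j y) j x = tensor_div T j x + tensor_div S j x"
  unfolding tensor_div_def cov_tensor_add[OF assms] by (simp add: distrib_left sum.distrib)

lemma tensor_div_cmult:
  assumes "x \<in> U" "\<And>i j. smooth (T i j)"
  shows "tensor_div (\<lambda>i j y. c * T i j y) j x = c * tensor_div T j x"
  unfolding tensor_div_def cov_tensor_cmult[OF assms] by (simp add: sum_distrib_left mult_ac)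

lemma cov_tensor_metric: "x \<in> U \<Longrightarrow> cov_tensor (\<lambda>i j y. g y $ i $ j) a i j x = 0"
  unfolding cov_tensor_def by (simp add: pd_metric metric_sym mult.commute)

lemma tensor_div_metric: "x \<in> U \<Longrightarrow> tensor_div (\<lambda>i j y. g y $ i $ j) j x = 0"
  unfolding tensor_div_def by (simp add: cov_tensor_metric)

lemma trace_nabla_curv:
  assumes x: "x \<in> U"
  shows "(\<Sum>i\<in>UNIV. nabla_curv a i j i k x) = cov_tensor (ricci g) a k j x"
proof -
  have "pd a (ricci g k j) x = pd a (\<lambda>y. \<Sum>i\<in>UNIV. curv_mat i j y $ i $ k) x"
    by (rule pd_cong_on[OF x]) (rule ricci_eq_trace_curv_mat)
  then have p: "pd a (ricci g k j) x = (\<Sum>i\<in>UNIV. pd a (\<lambda>y. curv_mat i j y $ i $ k) x)"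
    using x by simp
  have c1: "(\<Sum>i\<in>UNIV. \<Sum>m\<in>UNIV. christoffel g i a m x * curv_mat i j x $ m $ k)
      = (\<Sum>i\<in>UNIV. \<Sum>m\<in>UNIV. christoffel g m a i x * curv_mat m j x $ i $ k)"
    by (rule sum.swap)
  have c2: "(\<Sum>i\<in>UNIV. \<Sum>m\<in>UNIV. curv_mat i j x $ i $ m * christoffel g m a k x)
      = (\<Sum>m\<in>UNIV. christoffel g m a k x * ricci g m j x)"
    by (subst sum.swap) (simp add: ricci_eq_trace_curv_mat[OF x] sum_distrib_left mult.commute)
  have c3: "(\<Sum>i\<in>UNIV. \<Sum>m\<in>UNIV. christoffel g m a j x * curv_mat i m x $ i $ k)
      = (\<Sum>m\<in>UNIV. christoffel g m a j x * ricci g k m x)"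
    by (subst sum.swap) (simp add: ricci_eq_trace_curv_mat[OF x] sum_distrib_left)
  show ?thesis
    unfolding nabla_curv_def curv_mat_deriv_entry[OF x] cov_tensor_def sum_subtractf sum.distrib p c1 c2 c3
    by simp
qed

lemma trace_nabla_curv_swap:
  "x \<in> U \<Longrightarrow> (\<Sum>i\<in>UNIV. nabla_curv j a i i k x) = - cov_tensor (ricci g) j k a x"
  using trace_nabla_curv[of x j a k] nabla_curv_antisym[of x j a] by (simp add: sum_negf)

text \<open>The contraction of the curvature that appears when the second Bianchi identity is
  traced twice.\<close>

definition ricci_endo :: "'n \<Rightarrow> 'n \<Rightarrow> real^'n \<Rightarrow> real" where
  "ricci_endo l j x = (\<Sum>k\<in>UNIV. \<Sum>a\<in>UNIV. ginv g x $ k $ a * curv_mat j a x $ l $ k)"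

lemma ricci_endo_eq:
  assumes x: "x \<in> U"
  shows "ricci_endo l j x = (\<Sum>m\<in>UNIV. ginv g x $ l $ m * ricci g m j x)"
proof -
  have "ricci_endo l j x = (\<Sum>a\<in>UNIV. (curv_mat j a x ** ginv g x) $ l $ a)"
    unfolding ricci_endo_def by (subst sum.swap) (simp add: matrix_matrix_mult_def mult.commute)
  also have "\<dots> = (\<Sum>a\<in>UNIV. - (curv_mat j a x ** ginv g x) $ a $ l)"
    by (rule sum.cong[OF refl]) (rule curv_mat_ginv_antisym[OF x])
  also have "\<dots> = (\<Sum>a\<in>UNIV. \<Sum>m\<in>UNIV. ginv g x $ l $ m * curv_mat a j x $ a $ m)"
  proof (rule sum.cong[OF refl])
    fix a
    have "- (curv_mat j a x ** ginv g x) $ a $ l = (\<Sum>m\<in>UNIV. - (curv_mat j a x $ a $ m) * ginv g x $ m $ l)"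
      by (simp add: matrix_matrix_mult_def sum_negf)
    also have "\<dots> = (\<Sum>m\<in>UNIV. ginv g x $ l $ m * curv_mat a j x $ a $ m)"
      using curv_mat_antisym[of j a x] ginv_sym[OF x] by (intro sum.cong) auto
    finally show "- (curv_mat j a x ** ginv g x) $ a $ l
        = (\<Sum>m\<in>UNIV. ginv g x $ l $ m * curv_mat a j x $ a $ m)" .
  qed
  also have "\<dots> = (\<Sum>m\<in>UNIV. ginv g x $ l $ m * ricci g m j x)"
    by (subst sum.swap) (simp add: ricci_eq_trace_curv_mat[OF x] sum_distrib_left)
  finally show ?thesis .
qed

definition endo_div :: "('n \<Rightarrow> 'n \<Rightarrow> real^'n \<Rightarrow> real) \<Rightarrow> 'n \<Rightarrow> real^'n \<Rightarrow> real" where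
  "endo_div P j x = (\<Sum>i\<in>UNIV. pd i (P i j) x
     + (\<Sum>m\<in>UNIV. christoffel g i i m x * P m j x) - (\<Sum>m\<in>UNIV. christoffel g m i j x * P i m x))"

lemma ginv_contract_nabla_curv:
  assumes x: "x \<in> U"
  shows "(\<Sum>k\<in>UNIV. \<Sum>a\<in>UNIV. ginv g x $ k $ a * nabla_curv i j a i k x)
    = pd i (ricci_endo i j) x + (\<Sum>m\<in>UNIV. christoffel g i i m x * ricci_endo m j x)
      - (\<Sum>m\<in>UNIV. christoffel g m i j x * ricci_endo i m x)"
proof -
  define A1 where "A1 = (\<Sum>k\<in>UNIV. \<Sum>a\<in>UNIV. ginv g x $ k $ a * pd i (\<lambda>y. curv_mat j a y $ i $ k) x)"
  define A2 where "A2 = (\<Sum>k\<in>UNIV. \<Sum>a\<in>UNIV. \<Sum>m\<in>UNIV.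
    christoffel g i i m x * (ginv g x $ k $ a * curv_mat j a x $ m $ k))"
  define A3 where "A3 = (\<Sum>k\<in>UNIV. \<Sum>a\<in>UNIV. \<Sum>m\<in>UNIV.
    ginv g x $ k $ a * curv_mat j a x $ i $ m * christoffel g m i k x)"
  define A4 where "A4 = (\<Sum>k\<in>UNIV. \<Sum>a\<in>UNIV. \<Sum>m\<in>UNIV.
    christoffel g m i j x * (ginv g x $ k $ a * curv_mat m a x $ i $ k))"
  define A5 where "A5 = (\<Sum>k\<in>UNIV. \<Sum>a\<in>UNIV. \<Sum>m\<in>UNIV.
    ginv g x $ k $ a * christoffel g m i a x * curv_mat j m x $ i $ k)"
  have "ginv g x $ k $ a * nabla_curv i j a i k x
      = ginv g x $ k $ a * pd i (\<lambda>y. curv_mat j a y $ i $ k) x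
        + (\<Sum>m\<in>UNIV. christoffel g i i m x * (ginv g x $ k $ a * curv_mat j a x $ m $ k))
        - (\<Sum>m\<in>UNIV. ginv g x $ k $ a * curv_mat j a x $ i $ m * christoffel g m i k x)
        - (\<Sum>m\<in>UNIV. christoffel g m i j x * (ginv g x $ k $ a * curv_mat m a x $ i $ k))
        - (\<Sum>m\<in>UNIV. ginv g x $ k $ a * christoffel g m i a x * curv_mat j m x $ i $ k)" for k a
    unfolding nabla_curv_def curv_mat_deriv_entry[OF x]
    by (simp add: sum_distrib_left right_diff_distrib distrib_left mult_ac)
  then have "(\<Sum>k\<in>UNIV. \<Sum>a\<in>UNIV. ginv g x $ k $ a * nabla_curv i j a i k x) = A1 + A2 - A3 - A4 - A5"
    unfolding A1_def A2_def A3_def A4_def A5_def by (simp only: sum_subtractf sum.distrib)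
  moreover have "A2 = (\<Sum>m\<in>UNIV. christoffel g i i m x * ricci_endo m j x)"
    "A4 = (\<Sum>m\<in>UNIV. christoffel g m i j x * ricci_endo i m x)"
    unfolding A2_def A4_def ricci_endo_def by (subst sum_rotate3, simp add: sum_distrib_left)+
  moreover have "pd i (ricci_endo i j) x
      = (\<Sum>k\<in>UNIV. \<Sum>a\<in>UNIV. pd i (\<lambda>y. ginv g y $ k $ a) x * curv_mat j a x $ i $ k) + A1"
    unfolding ricci_endo_def[abs_def] A1_def using x by (simp add: sum.distrib)
  moreover have "(\<Sum>k\<in>UNIV. \<Sum>a\<in>UNIV. pd i (\<lambda>y. ginv g y $ k $ a) x * curv_mat j a x $ i $ k) = - A5 - A3"
  proof -
    have "A5 = (\<Sum>k\<in>UNIV. \<Sum>a\<in>UNIV. \<Sum>l\<in>UNIV. ginv g x $ k $ l * christoffel g a i l x * curv_mat j a x $ i $ k)"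
      unfolding A5_def by (rule sum.cong[OF refl]) (rule sum.swap)
    moreover have "A3 = (\<Sum>k\<in>UNIV. \<Sum>a\<in>UNIV. \<Sum>l\<in>UNIV.
        ginv g x $ l $ a * curv_mat j a x $ i $ k * christoffel g k i l x)"
      unfolding A3_def by (rule sum_reverse3)
    ultimately show ?thesis unfolding pd_ginv[OF x]
      by (simp add: sum_subtractf sum.distrib sum_distrib_left sum_distrib_right sum_negf algebra_simps)
  qed
  ultimately show ?thesis by simp
qed

lemma ginv_contract_trace_nabla_curv:
  assumes x: "x \<in> U"
  shows "(\<Sum>k\<in>UNIV. \<Sum>a\<in>UNIV. ginv g x $ k $ a * (\<Sum>i\<in>UNIV. nabla_curv i j a i k x)) = endo_div ricci_endo j x"
proof -
  have "(\<Sum>k\<in>UNIV. \<Sum>a\<in>UNIV. ginv g x $ k $ a * (\<Sum>i\<in>UNIV. nabla_curv i j a i k x))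
      = (\<Sum>k\<in>UNIV. \<Sum>a\<in>UNIV. \<Sum>i\<in>UNIV. ginv g x $ k $ a * nabla_curv i j a i k x)"
    by (simp add: sum_distrib_left)
  also have "\<dots> = (\<Sum>i\<in>UNIV. \<Sum>k\<in>UNIV. \<Sum>a\<in>UNIV. ginv g x $ k $ a * nabla_curv i j a i k x)"
    by (rule sum_rotate3)
  finally show ?thesis by (simp add: endo_div_def ginv_contract_nabla_curv[OF x])
qed

lemma endo_div_ricci_endo:
  assumes x: "x \<in> U"
  shows "endo_div ricci_endo j x = tensor_div (ricci g) j x"
proof -
  have pd_ricci_endo: "pd i (ricci_endo i j) x = (\<Sum>p\<in>UNIV. pd i (\<lambda>y. ginv g y $ i $ p) x * ricci g p j x)
      + (\<Sum>p\<in>UNIV. ginv g x $ i $ p * pd i (ricci g p j) x)" for i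
  proof -
    have "pd i (ricci_endo i j) x = pd i (\<lambda>y. \<Sum>p\<in>UNIV. ginv g y $ i $ p * ricci g p j y) x"
      by (rule pd_cong_on[OF x]) (rule ricci_endo_eq)
    then show ?thesis using x by (simp add: sum.distrib)
  qed
  define S1 where "S1 = (\<Sum>i\<in>UNIV. \<Sum>p\<in>UNIV. ginv g x $ i $ p * pd i (ricci g p j) x)"
  define S2 where "S2 = (\<Sum>i\<in>UNIV. \<Sum>p\<in>UNIV. \<Sum>l\<in>UNIV. ginv g x $ i $ l * christoffel g p i l x * ricci g p j x)"
  define S3 where "S3 = (\<Sum>i\<in>UNIV. \<Sum>p\<in>UNIV. \<Sum>l\<in>UNIV. christoffel g i i l x * ginv g x $ l $ p * ricci g p j x)"
  define S4 where "S4 = (\<Sum>i\<in>UNIV. \<Sum>m\<in>UNIV. \<Sum>p\<in>UNIV. christoffel g i i m x * ginv g x $ m $ p * ricci g p j x)"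
  define S5 where "S5 = (\<Sum>i\<in>UNIV. \<Sum>m\<in>UNIV. \<Sum>p\<in>UNIV. christoffel g m i j x * ginv g x $ i $ p * ricci g p m x)"
  have "endo_div ricci_endo j x = S1 - S2 - S3 + S4 - S5"
    unfolding endo_div_def pd_ricci_endo S1_def S2_def S3_def S4_def S5_def ricci_endo_eq[OF x] pd_ginv[OF x]
    by (simp add: sum_subtractf sum.distrib sum_distrib_left sum_distrib_right sum_negf algebra_simps)
  moreover have "S3 = S4" unfolding S3_def S4_def
    by (rule sum.cong[OF refl]) (rule sum.swap)
  moreover have "S2 = (\<Sum>a\<in>UNIV. \<Sum>i\<in>UNIV. \<Sum>l\<in>UNIV. ginv g x $ a $ i * christoffel g l a i x * ricci g l j x)"
    "S5 = (\<Sum>a\<in>UNIV. \<Sum>i\<in>UNIV. \<Sum>l\<in>UNIV. christoffel g l a j x * ginv g x $ a $ i * ricci g i l x)"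
    unfolding S2_def S5_def by (rule sum.cong[OF refl], rule sum.swap)+
  then have "tensor_div (ricci g) j x = S1 - S2 - S5"
    unfolding tensor_div_def cov_tensor_def S1_def
    by (simp add: sum_subtractf sum.distrib sum_distrib_left algebra_simps)
  ultimately show ?thesis by simp
qed

lemma ginv_contract_cov_ricci:
  assumes x: "x \<in> U"
  shows "(\<Sum>k\<in>UNIV. \<Sum>a\<in>UNIV. ginv g x $ k $ a * cov_tensor (ricci g) j k a x) = pd j (scalar_curv g) x"
proof -
  define S1 where "S1 = (\<Sum>k\<in>UNIV. \<Sum>a\<in>UNIV. ginv g x $ k $ a * pd j (ricci g k a) x)"
  define S2 where "S2 = (\<Sum>k\<in>UNIV. \<Sum>a\<in>UNIV. \<Sum>l\<in>UNIV. ginv g x $ k $ a * christoffel g l j k x * ricci g l a x)"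
  define S3 where "S3 = (\<Sum>k\<in>UNIV. \<Sum>a\<in>UNIV. \<Sum>l\<in>UNIV. ginv g x $ k $ a * christoffel g l j a x * ricci g k l x)"
  have "(\<Sum>k\<in>UNIV. \<Sum>a\<in>UNIV. ginv g x $ k $ a * cov_tensor (ricci g) j k a x) = S1 - S2 - S3"
    unfolding cov_tensor_def S1_def S2_def S3_def
    by (simp add: sum_subtractf sum.distrib sum_distrib_left algebra_simps)
  moreover have "S2 = (\<Sum>k\<in>UNIV. \<Sum>a\<in>UNIV. \<Sum>l\<in>UNIV. ginv g x $ l $ a * christoffel g k j l x * ricci g k a x)"
    unfolding S2_def by (rule sum_reverse3)
  moreover have "S3 = (\<Sum>k\<in>UNIV. \<Sum>a\<in>UNIV. \<Sum>l\<in>UNIV. ginv g x $ k $ l * christoffel g a j l x * ricci g k a x)"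
    unfolding S3_def by (rule sum.cong[OF refl]) (rule sum.swap)
  ultimately show ?thesis
    unfolding scalar_curv_def[abs_def] S1_def using x
    by (simp add: pd_ginv[OF x] sum_subtractf sum.distrib sum_distrib_left sum_distrib_right sum_negf
        algebra_simps)
qed

lemma contracted_bianchi:
  assumes x: "x \<in> U"
  shows "2 * tensor_div (ricci g) j x = pd j (scalar_curv g) x"
proof -
  have "0 = (\<Sum>k\<in>UNIV. \<Sum>a\<in>UNIV. ginv g x $ k $ a
      * (\<Sum>i\<in>UNIV. nabla_curv a i j i k x + nabla_curv i j a i k x + nabla_curv j a i i k x))"
    using second_bianchi[OF x] by simp
  also have "\<dots> = (\<Sum>k\<in>UNIV. \<Sum>a\<in>UNIV. ginv g x $ k $ a * cov_tensor (ricci g) a k j x)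
      + (\<Sum>k\<in>UNIV. \<Sum>a\<in>UNIV. ginv g x $ k $ a * (\<Sum>i\<in>UNIV. nabla_curv i j a i k x))
      - (\<Sum>k\<in>UNIV. \<Sum>a\<in>UNIV. ginv g x $ k $ a * cov_tensor (ricci g) j k a x)"
    by (simp add: sum.distrib trace_nabla_curv[OF x] trace_nabla_curv_swap[OF x] distrib_left
        sum_subtractf right_diff_distrib)
  also have "(\<Sum>k\<in>UNIV. \<Sum>a\<in>UNIV. ginv g x $ k $ a * cov_tensor (ricci g) a k j x) = tensor_div (ricci g) j x"
    unfolding tensor_div_def by (subst sum.swap) (simp add: ginv_sym[OF x])
  finally show ?thesis
    using ginv_contract_trace_nabla_curv[OF x] endo_div_ricci_endo[OF x] ginv_contract_cov_ricci[OF x]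
    by simp
qed

lemma tensor_div_ricci_const_scalar_curv:
  "x \<in> U \<Longrightarrow> (\<And>y. y \<in> U \<Longrightarrow> scalar_curv g y = c) \<Longrightarrow> tensor_div (ricci g) j x = 0"
  using contracted_bianchi[of x j] pd_eq_zero_if_const[of x "scalar_curv g" c j] by simp

section \<open>The Ricci identity for 1-forms\<close>

lemma cov1_smooth [simp]: "(\<And>j. smooth (\<theta> j)) \<Longrightarrow> smooth (cov1 g \<theta> k j)"
  unfolding cov1_def[abs_def] by simp

lemma ricci_identity:
  assumes x: "x \<in> U" and \<theta>: "\<And>j. smooth (\<theta> j)"
  shows "cov2 g \<theta> a k j x - cov2 g \<theta> k a j x = - (\<Sum>m\<in>UNIV. curv_mat a k x $ m $ j * \<theta> m x)"
proof -
  have pd_cov1: "pd a (cov1 g \<theta> k j) x = pd a (pd k (\<theta> j)) x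
      - (\<Sum>l\<in>UNIV. pd a (christoffel g l k j) x * \<theta> l x + christoffel g l k j x * pd a (\<theta> l) x)"
    for a k j
    unfolding cov1_def[abs_def] using x \<theta> by simp
  have swap1: "(\<Sum>m\<in>UNIV. \<Sum>l\<in>UNIV. christoffel g m a l x * christoffel g l k j x * \<theta> m x)
      = (\<Sum>l\<in>UNIV. \<Sum>m\<in>UNIV. christoffel g m a l x * christoffel g l k j x * \<theta> m x)"
    and swap2: "(\<Sum>m\<in>UNIV. \<Sum>l\<in>UNIV. christoffel g m k l x * christoffel g l a j x * \<theta> m x)
      = (\<Sum>l\<in>UNIV. \<Sum>m\<in>UNIV. christoffel g m k l x * christoffel g l a j x * \<theta> m x)"
    by (rule sum.swap)+
  have "(\<Sum>m\<in>UNIV. curv_mat a k x $ m $ j * \<theta> m x)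
      = (\<Sum>m\<in>UNIV. pd a (christoffel g m k j) x * \<theta> m x) - (\<Sum>m\<in>UNIV. pd k (christoffel g m a j) x * \<theta> m x)
        + (\<Sum>l\<in>UNIV. \<Sum>m\<in>UNIV. christoffel g m a l x * christoffel g l k j x * \<theta> m x)
        - (\<Sum>l\<in>UNIV. \<Sum>m\<in>UNIV. christoffel g m k l x * christoffel g l a j x * \<theta> m x)"
    unfolding curv_mat_entry[OF x] swap1[symmetric] swap2[symmetric]
    by (simp add: sum_subtractf sum.distrib sum_distrib_right sum_distrib_left algebra_simps)
  then show ?thesis
    unfolding cov2_def pd_cov1 unfolding cov1_def
    using x \<theta> by (simp add: pd_commute[of "\<theta> j" x a k] christoffel_sym[OF x, of _ a k] sum_subtractf
        sum.distrib sum_distrib_left algebra_simps)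
qed

lemma ricci_identity_contracted:
  assumes x: "x \<in> U" and \<theta>: "\<And>j. smooth (\<theta> j)"
  shows "(\<Sum>a\<in>UNIV. \<Sum>i\<in>UNIV. ginv g x $ a $ i * (cov2 g \<theta> a j i x - cov2 g \<theta> j a i x)) = ric_sharp g \<theta> j x"
proof -
  have "(\<Sum>a\<in>UNIV. \<Sum>i\<in>UNIV. ginv g x $ a $ i * (cov2 g \<theta> a j i x - cov2 g \<theta> j a i x))
      = (\<Sum>a\<in>UNIV. \<Sum>i\<in>UNIV. \<Sum>m\<in>UNIV. \<theta> m x * (ginv g x $ i $ a * curv_mat j a x $ m $ i))"
  proof (intro sum.cong refl)
    fix a i
    show "ginv g x $ a $ i * (cov2 g \<theta> a j i x - cov2 g \<theta> j a i x)
        = (\<Sum>m\<in>UNIV. \<theta> m x * (ginv g x $ i $ a * curv_mat j a x $ m $ i))"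
      unfolding ricci_identity[OF x \<theta>]
      by (simp add: curv_mat_antisym[of a j] sum_distrib_left sum_negf ginv_sym[OF x, of a i] mult_ac)
  qed
  also have "\<dots> = (\<Sum>m\<in>UNIV. \<theta> m x * ricci_endo m j x)"
    unfolding ricci_endo_def by (subst sum_reverse3) (simp add: sum_distrib_left)
  also have "\<dots> = (\<Sum>m\<in>UNIV. \<Sum>p\<in>UNIV. \<theta> m x * ginv g x $ m $ p * ricci g p j x)"
    by (simp add: ricci_endo_eq[OF x] sum_distrib_left mult.assoc)
  also have "\<dots> = ric_sharp g \<theta> j x"
    unfolding ric_sharp_def
    by (subst sum.swap, intro sum.cong refl) (simp add: ginv_sym[OF x] mult_ac)
  finally show ?thesis .
qed

text \<open>Tracing with g^{-1} commutes with \<nabla>_j because g^{-1} is parallel.\<close>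

lemma trace_cov2_eq_pd_trace_cov1:
  assumes x: "x \<in> U" and \<theta>: "\<And>j. smooth (\<theta> j)"
  shows "(\<Sum>a\<in>UNIV. \<Sum>i\<in>UNIV. ginv g x $ a $ i * cov2 g \<theta> j a i x)
    = pd j (\<lambda>y. \<Sum>a\<in>UNIV. \<Sum>i\<in>UNIV. ginv g y $ a $ i * cov1 g \<theta> a i y) x"
proof -
  define S1 where "S1 = (\<Sum>a\<in>UNIV. \<Sum>i\<in>UNIV. ginv g x $ a $ i * pd j (cov1 g \<theta> a i) x)"
  define S2 where "S2 = (\<Sum>a\<in>UNIV. \<Sum>i\<in>UNIV. \<Sum>l\<in>UNIV. ginv g x $ a $ i * christoffel g l j a x * cov1 g \<theta> l i x)"
  define S3 where "S3 = (\<Sum>a\<in>UNIV. \<Sum>i\<in>UNIV. \<Sum>l\<in>UNIV. ginv g x $ a $ i * christoffel g l j i x * cov1 g \<theta> a l x)"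
  have "(\<Sum>a\<in>UNIV. \<Sum>i\<in>UNIV. ginv g x $ a $ i * cov2 g \<theta> j a i x) = S1 - S2 - S3"
    unfolding cov2_def S1_def S2_def S3_def
    by (simp add: sum_subtractf sum.distrib sum_distrib_left algebra_simps)
  moreover have "S2 = (\<Sum>a\<in>UNIV. \<Sum>i\<in>UNIV. \<Sum>l\<in>UNIV. ginv g x $ l $ i * christoffel g a j l x * cov1 g \<theta> a i x)"
    unfolding S2_def by (rule sum_reverse3)
  moreover have "S3 = (\<Sum>a\<in>UNIV. \<Sum>i\<in>UNIV. \<Sum>l\<in>UNIV. ginv g x $ a $ l * christoffel g i j l x * cov1 g \<theta> a i x)"
    unfolding S3_def by (rule sum.cong[OF refl]) (rule sum.swap)
  ultimately show ?thesis
    unfolding S1_def using x \<theta>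
    by (simp add: pd_ginv[OF x] sum_subtractf sum.distrib sum_distrib_left sum_distrib_right sum_negf
        algebra_simps)
qed

end

section \<open>Divergence of the soliton equation\<close>

locale riemannian_chart_field = riemannian_chart U g for U :: "(real^'n::finite) set" and g +
  fixes \<xi> :: "real^'n \<Rightarrow> real^'n"
  assumes field_smooth [simp]: "\<And>i. smooth (\<lambda>x. \<xi> x $ i)"
begin

abbreviation \<theta> :: "'n \<Rightarrow> real^'n \<Rightarrow> real" where
  "\<theta> \<equiv> flat g \<xi>"

lemma flat_smooth [simp]: "smooth (\<theta> j)"
  unfolding flat_def[abs_def] by simp

lemma cov1_flat:
  assumes x: "x \<in> U"
  shows "cov1 g \<theta> a i x
    = (\<Sum>k\<in>UNIV. g x $ i $ k * (pd a (\<lambda>y. \<xi> y $ k) x + (\<Sum>l\<in>UNIV. christoffel g k a l x * \<xi> x $ l)))"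
proof -
  have swap1: "(\<Sum>l\<in>UNIV. \<Sum>k\<in>UNIV. christoffel g l a i x * g x $ l $ k * \<xi> x $ k)
      = (\<Sum>k\<in>UNIV. \<Sum>l\<in>UNIV. christoffel g l a i x * g x $ l $ k * \<xi> x $ k)"
    and swap2: "(\<Sum>k\<in>UNIV. \<Sum>l\<in>UNIV. g x $ i $ k * christoffel g k a l x * \<xi> x $ l)
      = (\<Sum>l\<in>UNIV. \<Sum>k\<in>UNIV. g x $ i $ k * christoffel g k a l x * \<xi> x $ l)"
    by (rule sum.swap)+
  have "cov1 g \<theta> a i x = (\<Sum>k\<in>UNIV. \<Sum>l\<in>UNIV. christoffel g l a i x * g x $ l $ k * \<xi> x $ k)
     + (\<Sum>k\<in>UNIV. \<Sum>l\<in>UNIV. christoffel g l a k x * g x $ i $ l * \<xi> x $ k)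
     + (\<Sum>k\<in>UNIV. g x $ i $ k * pd a (\<lambda>y. \<xi> y $ k) x)
     - (\<Sum>l\<in>UNIV. \<Sum>k\<in>UNIV. christoffel g l a i x * g x $ l $ k * \<xi> x $ k)"
    unfolding cov1_def flat_def[abs_def] using x
    by (simp add: pd_metric[OF x] sum.distrib sum_distrib_left sum_distrib_right algebra_simps)
  also have "\<dots> = (\<Sum>k\<in>UNIV. \<Sum>l\<in>UNIV. g x $ i $ k * christoffel g k a l x * \<xi> x $ l)
     + (\<Sum>k\<in>UNIV. g x $ i $ k * pd a (\<lambda>y. \<xi> y $ k) x)"
    unfolding swap1 swap2 by (simp add: mult_ac)
  also have "\<dots>
      = (\<Sum>k\<in>UNIV. g x $ i $ k * (pd a (\<lambda>y. \<xi> y $ k) x + (\<Sum>l\<in>UNIV. christoffel g k a l x * \<xi> x $ l)))"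
    by (simp add: sum.distrib sum_distrib_left distrib_left mult_ac)
  finally show ?thesis .
qed

lemma divergence_eq_trace_cov1:
  assumes x: "x \<in> U"
  shows "divergence g \<xi> x = (\<Sum>a\<in>UNIV. \<Sum>i\<in>UNIV. ginv g x $ a $ i * cov1 g \<theta> a i x)"
  unfolding cov1_flat[OF x] sum_ginv_metric_contract[OF x] divergence_def by (simp add: sum.distrib)

lemma ginv_flat: "x \<in> U \<Longrightarrow> (\<Sum>i\<in>UNIV. ginv g x $ a $ i * \<theta> i x) = \<xi> x $ a"
  unfolding flat_def by (rule sum_ginv_metric_contract)

lemma sum_flat_mult_field: "(\<Sum>j\<in>UNIV. \<theta> j x * \<xi> x $ j) = sq_length g \<xi> x"
  unfolding flat_def sq_length_def
  by (simp add: sum_distrib_right sum_distrib_left mult_ac)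

lemma lie_metric_eq_cov1:
  assumes x: "x \<in> U"
  shows "lie_metric g \<xi> i j x = cov1 g \<theta> i j x + cov1 g \<theta> j i x"
proof -
  have swap1: "(\<Sum>k\<in>UNIV. \<Sum>l\<in>UNIV. \<xi> x $ k * (christoffel g l k i x * g x $ l $ j))
     = (\<Sum>k\<in>UNIV. \<Sum>l\<in>UNIV. g x $ j $ k * (christoffel g k i l x * \<xi> x $ l))"
    by (subst sum.swap) (simp add: christoffel_sym[OF x] metric_sym[OF x] mult_ac)
  have swap2: "(\<Sum>k\<in>UNIV. \<Sum>l\<in>UNIV. \<xi> x $ k * (christoffel g l k j x * g x $ i $ l))
     = (\<Sum>k\<in>UNIV. \<Sum>l\<in>UNIV. g x $ i $ k * (christoffel g k j l x * \<xi> x $ l))"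
    by (subst sum.swap) (simp add: christoffel_sym[OF x] metric_sym[OF x] mult_ac)
  have "lie_metric g \<xi> i j x
      = (\<Sum>k\<in>UNIV. \<Sum>l\<in>UNIV. \<xi> x $ k * (christoffel g l k i x * g x $ l $ j))
        + (\<Sum>k\<in>UNIV. \<Sum>l\<in>UNIV. \<xi> x $ k * (christoffel g l k j x * g x $ i $ l))
        + (\<Sum>k\<in>UNIV. g x $ k $ j * pd i (\<lambda>y. \<xi> y $ k) x) + (\<Sum>k\<in>UNIV. g x $ i $ k * pd j (\<lambda>y. \<xi> y $ k) x)"
    unfolding lie_metric_def pd_metric[OF x] by (simp add: sum.distrib sum_distrib_left distrib_left)
  then show ?thesis unfolding swap1 swap2 cov1_flat[OF x]
    by (simp add: sum.distrib sum_distrib_left distrib_left metric_sym[OF x] algebra_simps)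
qed

lemma pd_sq_length:
  assumes x: "x \<in> U"
  shows "pd a (sq_length g \<xi>) x = 2 * (\<Sum>j\<in>UNIV. \<xi> x $ j * cov1 g \<theta> a j x)"
proof -
  define Chr1 where "Chr1 = (\<Sum>i\<in>UNIV. \<Sum>j\<in>UNIV. \<Sum>l\<in>UNIV.
    \<xi> x $ i * \<xi> x $ j * (christoffel g l a i x * g x $ l $ j))"
  define Chr2 where "Chr2 = (\<Sum>i\<in>UNIV. \<Sum>j\<in>UNIV. \<Sum>l\<in>UNIV.
    \<xi> x $ i * \<xi> x $ j * (christoffel g l a j x * g x $ i $ l))"
  define Dxi1 where "Dxi1 = (\<Sum>i\<in>UNIV. \<Sum>j\<in>UNIV. g x $ i $ j * pd a (\<lambda>y. \<xi> y $ i) x * \<xi> x $ j)"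
  define Dxi2 where "Dxi2 = (\<Sum>i\<in>UNIV. \<Sum>j\<in>UNIV. g x $ i $ j * \<xi> x $ i * pd a (\<lambda>y. \<xi> y $ j) x)"
  have L: "pd a (sq_length g \<xi>) x = Chr1 + Chr2 + Dxi1 + Dxi2"
    unfolding sq_length_def[abs_def] Chr1_def Chr2_def Dxi1_def Dxi2_def using x
    by (simp add: pd_metric[OF x] sum.distrib sum_distrib_left sum_distrib_right algebra_simps)
  have e1: "Chr1 = Chr2" unfolding Chr1_def Chr2_def
    by (subst sum.swap) (simp add: metric_sym[OF x] mult_ac)
  have e2: "Dxi1 = Dxi2" unfolding Dxi1_def Dxi2_def
    by (subst sum.swap) (simp add: metric_sym[OF x] mult_ac)
  have e3: "Chr2
      = (\<Sum>j\<in>UNIV. \<Sum>k\<in>UNIV. \<Sum>l\<in>UNIV. \<xi> x $ j * (g x $ j $ k * (christoffel g k a l x * \<xi> x $ l)))"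
    unfolding Chr2_def
    by (rule sum.cong[OF refl], subst sum.swap, rule sum.cong[OF refl], rule sum.cong[OF refl])
      (simp add: mult_ac)
  have R: "2 * (\<Sum>j\<in>UNIV. \<xi> x $ j * cov1 g \<theta> a j x) = 2 * Chr2 + 2 * Dxi2"
    unfolding cov1_flat[OF x] e3 Dxi2_def
    by (simp add: sum.distrib sum_distrib_left distrib_left algebra_simps)
  show ?thesis unfolding L R e1 e2 by simp
qed

lemma lie_metric_smooth [simp]: "smooth (lie_metric g \<xi> i j)"
  unfolding lie_metric_def[abs_def] by simp

lemma cov_tensor_lie_metric:
  assumes x: "x \<in> U"
  shows "cov_tensor (lie_metric g \<xi>) a i j x = cov2 g \<theta> a i j x + cov2 g \<theta> a j i x"
proof -
  have "cov_tensor (lie_metric g \<xi>) a i j x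
      = cov_tensor (\<lambda>i j y. cov1 g \<theta> i j y + cov1 g \<theta> j i y) a i j x"
    by (rule cov_tensor_cong[OF x]) (rule lie_metric_eq_cov1)
  also have "\<dots> = cov2 g \<theta> a i j x + cov2 g \<theta> a j i x"
    unfolding cov_tensor_def cov2_def using x by (simp add: sum.distrib algebra_simps)
  finally show ?thesis .
qed

text \<open>The identity by which the paper fixes its sign convention for the Laplacian.\<close>

lemma tensor_div_lie_metric:
  assumes x: "x \<in> U"
  shows "tensor_div (lie_metric g \<xi>) j x
    = laplace1 g \<theta> j x + ric_sharp g \<theta> j x + pd j (divergence g \<xi>) x"
proof -
  have "tensor_div (lie_metric g \<xi>) j x = laplace1 g \<theta> j x
      + (\<Sum>a\<in>UNIV. \<Sum>i\<in>UNIV. ginv g x $ a $ i * (cov2 g \<theta> a j i x - cov2 g \<theta> j a i x))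
      + (\<Sum>a\<in>UNIV. \<Sum>i\<in>UNIV. ginv g x $ a $ i * cov2 g \<theta> j a i x)"
    unfolding tensor_div_def laplace1_def cov_tensor_lie_metric[OF x]
    by (simp add: sum.distrib[symmetric] algebra_simps)
  also have "\<dots> = laplace1 g \<theta> j x + ric_sharp g \<theta> j x
      + pd j (\<lambda>y. \<Sum>a\<in>UNIV. \<Sum>i\<in>UNIV. ginv g y $ a $ i * cov1 g \<theta> a i y) x"
    using ricci_identity_contracted[OF x] trace_cov2_eq_pd_trace_cov1[OF x] by simp
  also have "pd j (\<lambda>y. \<Sum>a\<in>UNIV. \<Sum>i\<in>UNIV. ginv g y $ a $ i * cov1 g \<theta> a i y) x
      = pd j (divergence g \<xi>) x"
    by (rule pd_cong_on[OF x]) (simp add: divergence_eq_trace_cov1)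
  finally show ?thesis .
qed

lemma tensor_div_flat_mult_flat:
  assumes x: "x \<in> U"
  shows "tensor_div (\<lambda>i j y. \<theta> i y * \<theta> j y) j x
    = divergence g \<xi> x * \<theta> j x + (\<Sum>a\<in>UNIV. \<xi> x $ a * cov1 g \<theta> a j x)"
proof -
  have "cov_tensor (\<lambda>i j y. \<theta> i y * \<theta> j y) a i j x
      = cov1 g \<theta> a i x * \<theta> j x + \<theta> i x * cov1 g \<theta> a j x" for a i
    unfolding cov_tensor_def cov1_def using x
    by (simp add: sum_distrib_left sum_distrib_right sum_subtractf algebra_simps)
  then have "tensor_div (\<lambda>i j y. \<theta> i y * \<theta> j y) j x
      = \<theta> j x * (\<Sum>a\<in>UNIV. \<Sum>i\<in>UNIV. ginv g x $ a $ i * cov1 g \<theta> a i x)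
        + (\<Sum>a\<in>UNIV. cov1 g \<theta> a j x * (\<Sum>i\<in>UNIV. ginv g x $ a $ i * \<theta> i x))"
    unfolding tensor_div_def by (simp add: sum.distrib sum_distrib_left algebra_simps)
  also have "\<dots> = divergence g \<xi> x * \<theta> j x + (\<Sum>a\<in>UNIV. \<xi> x $ a * cov1 g \<theta> a j x)"
    unfolding divergence_eq_trace_cov1[OF x] ginv_flat[OF x] by (simp add: mult_ac)
  finally show ?thesis .
qed

lemma sum_field_mult_cov1_flat_eq_zero:
  "x \<in> U \<Longrightarrow> (\<And>y. y \<in> U \<Longrightarrow> sq_length g \<xi> y = c) \<Longrightarrow>
    (\<Sum>j\<in>UNIV. \<xi> x $ j * cov1 g \<theta> a j x) = 0"
  using pd_sq_length[of x a] pd_eq_zero_if_const[of x "sq_length g \<xi>" c a] by simp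

lemma soliton_divergence:
  assumes x: "x \<in> U"
    and scal: "\<And>y. y \<in> U \<Longrightarrow> scalar_curv g y = s"
    and schroedinger_ricci: "\<And>y j. y \<in> U \<Longrightarrow>
      laplace1 g \<theta> j y + ric_sharp g \<theta> j y + pd j (divergence g \<xi>) y = 0"
    and soliton: "\<And>y i j. y \<in> U \<Longrightarrow>
      (1/2) * lie_metric g \<xi> i j y + ricci g i j y = \<gamma> * g y $ i $ j + \<delta> * \<theta> i y * \<theta> j y"
  shows "\<delta> * (divergence g \<xi> x * \<theta> j x + (\<Sum>a\<in>UNIV. \<xi> x $ a * cov1 g \<theta> a j x)) = 0"
proof -
  have "tensor_div (\<lambda>i j y. (1/2) * lie_metric g \<xi> i j y + ricci g i j y) j x
      = tensor_div (\<lambda>i j y. \<gamma> * g y $ i $ j + \<delta> * (\<theta> i y * \<theta> j y)) j x"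
    by (rule tensor_div_cong[OF x]) (simp only: soliton mult.assoc[symmetric])
  moreover have "tensor_div (\<lambda>i j y. (1/2) * lie_metric g \<xi> i j y + ricci g i j y) j x
      = tensor_div (\<lambda>i j y. (1/2) * lie_metric g \<xi> i j y) j x + tensor_div (ricci g) j x"
    by (rule tensor_div_add[OF x]) simp_all
  moreover have "tensor_div (\<lambda>i j y. (1/2) * lie_metric g \<xi> i j y) j x
      = (1/2) * tensor_div (lie_metric g \<xi>) j x"
    by (rule tensor_div_cmult[OF x]) simp
  moreover have "tensor_div (lie_metric g \<xi>) j x = 0" "tensor_div (ricci g) j x = 0"
    using schroedinger_ricci[OF x] tensor_div_ricci_const_scalar_curv[OF x scal]
    by (simp_all add: tensor_div_lie_metric[OF x])
  moreover have "tensor_div (\<lambda>i j y. \<gamma> * g y $ i $ j + \<delta> * (\<theta> i y * \<theta> j y)) j x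
      = \<delta> * tensor_div (\<lambda>i j y. \<theta> i y * \<theta> j y) j x"
    using x by (simp add: tensor_div_add tensor_div_cmult tensor_div_metric)
  ultimately show ?thesis by (simp add: tensor_div_flat_mult_flat[OF x])
qed

lemma soliton_divergence_mult_sq_length:
  assumes x: "x \<in> U"
    and scal: "\<And>y. y \<in> U \<Longrightarrow> scalar_curv g y = s"
    and schroedinger_ricci: "\<And>y j. y \<in> U \<Longrightarrow>
      laplace1 g \<theta> j y + ric_sharp g \<theta> j y + pd j (divergence g \<xi>) y = 0"
    and soliton: "\<And>y i j. y \<in> U \<Longrightarrow>
      (1/2) * lie_metric g \<xi> i j y + ricci g i j y = \<gamma> * g y $ i $ j + \<delta> * \<theta> i y * \<theta> j y"
    and length: "\<And>y. y \<in> U \<Longrightarrow> sq_length g \<xi> y = c"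
  shows "\<delta> * divergence g \<xi> x * c = 0"
proof (cases "\<delta> = 0")
  case False
  then have soliton_div:
    "divergence g \<xi> x * \<theta> j x + (\<Sum>a\<in>UNIV. \<xi> x $ a * cov1 g \<theta> a j x) = 0" for j
    using soliton_divergence[OF x scal schroedinger_ricci soliton] by simp
  have "0 = (\<Sum>j\<in>UNIV. \<xi> x $ j
      * (divergence g \<xi> x * \<theta> j x + (\<Sum>a\<in>UNIV. \<xi> x $ a * cov1 g \<theta> a j x)))"
    by (simp add: soliton_div)
  also have "\<dots> = divergence g \<xi> x * (\<Sum>j\<in>UNIV. \<theta> j x * \<xi> x $ j)
      + (\<Sum>j\<in>UNIV. \<Sum>a\<in>UNIV. \<xi> x $ a * (\<xi> x $ j * cov1 g \<theta> a j x))"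
    by (simp add: distrib_left sum.distrib sum_distrib_left mult_ac)
  also have "(\<Sum>j\<in>UNIV. \<Sum>a\<in>UNIV. \<xi> x $ a * (\<xi> x $ j * cov1 g \<theta> a j x)) = 0"
    by (subst sum.swap)
      (simp add: sum_distrib_left[symmetric] sum_field_mult_cov1_flat_eq_zero[OF x length])
  finally show ?thesis using sum_flat_mult_field length[OF x] by simp
qed simp

lemma divergence_eq_zero_if_sq_length_zero:
  assumes x: "x \<in> U" and null: "\<And>y. y \<in> U \<Longrightarrow> sq_length g \<xi> y = 0"
  shows "divergence g \<xi> x = 0"
proof -
  have field_zero: "\<xi> y $ i = 0" if y: "y \<in> U" for y i
  proof (rule ccontr)
    assume "\<xi> y $ i \<noteq> 0"
    then have "\<xi> y \<noteq> 0" by auto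
    moreover have "sq_length g \<xi> y
        = (\<Sum>i\<in>UNIV. \<Sum>j\<in>UNIV. \<xi> y $ i * g y $ i $ j * \<xi> y $ j)"
      unfolding sq_length_def by (simp add: mult_ac)
    ultimately have "0 < sq_length g \<xi> y" using metric_pos[OF y] by simp
    then show False using null[OF y] by simp
  qed
  then have "pd i (\<lambda>y. \<xi> y $ i) x = 0" for i by (rule pd_eq_zero_if_const[OF x])
  then show ?thesis unfolding divergence_def using field_zero[OF x] by simp
qed

end

theorem theorem3p3:
  fixes U :: "(real^'n::finite) set"
    and g :: "real^'n \<Rightarrow> real^'n^'n"
    and \<xi> :: "real^'n \<Rightarrow> real^'n"
    and \<gamma> \<delta> :: real
  assumes dim: "CARD('n) \<ge> 3"
    and U_open: "open U"
    and metric: "riemannian_metric U g"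
    and xi_smooth: "\<forall>i. smooth_on U (\<lambda>x. \<xi> x $ i)"
    and const_scal: "\<exists>c. \<forall>x\<in>U. scalar_curv g x = c"
    and const_len: "\<exists>c. \<forall>x\<in>U. sq_length g \<xi> x = c"
    and schroedinger_ricci: "\<forall>x\<in>U. \<forall>j.
          laplace1 g (flat g \<xi>) j x + ric_sharp g (flat g \<xi>) j x + pd j (divergence g \<xi>) x = 0"
    and soliton: "\<forall>x\<in>U. \<forall>i j.
          (1/2) * lie_metric g \<xi> i j x + ricci g i j x
            = \<gamma> * g x $ i $ j + \<delta> * flat g \<xi> i x * flat g \<xi> j x"
  shows "\<delta> = 0 \<or> (\<forall>x\<in>U. divergence g \<xi> x = 0)"
proof -
  interpret riemannian_chart_field U g \<xi>
    using U_open metric xi_smooth by unfold_locales auto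
  obtain s where scal: "\<forall>x\<in>U. scalar_curv g x = s" using const_scal by blast
  obtain c where length: "\<forall>x\<in>U. sq_length g \<xi> x = c" using const_len by blast
  have "divergence g \<xi> x = 0" if "\<delta> \<noteq> 0" "x \<in> U" for x
  proof (cases "c = 0")
    case True
    then show ?thesis using divergence_eq_zero_if_sq_length_zero \<open>x \<in> U\<close> length by simp
  next
    case False
    then show ?thesis
      using soliton_divergence_mult_sq_length[of x s \<gamma> \<delta> c] that scal length schroedinger_ricci soliton
      by simp
  qed
  then show ?thesis by blast
qed

end
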